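(* Let $X$ be a topological space and $U,V\subset X$ path-connected open subsets with $X=U\cup V$, such that $U\cap V$ has $m+1$ path-connected components $A_0,A_1,\dots,A_m$, $m\ge 1$. Let $a_i\in A_i$ for each $i$ and $Y=\{a_0,a_1,\dots,a_m\}$, and let $G$ be a group. Then the square of restriction maps $H^1(X,Y)\xrightarrow{r_U}H^1(U,Y)\xrightarrow{r_{U\cap V}}H^1(U\cap V,Y)$, $H^1(X,Y)\xrightarrow{r_V}H^1(V,Y)\xrightarrow{r_{U\cap V}}H^1(U\cap V,Y)$ is commutative and cartesian (i.e. $(r_U,r_V)$ is a bijection from $H^1(X,Y)$ onto the fibered product of $H^1(U,Y)$ and $H^1(V,Y)$ over $H^1(U\cap V,Y)$). Moreover there is a canonical bijection between $H^1(U\cap V,Y)$ and $\prod_i H^1(A_i,a_i)$, given by restricting to the components $A_i$.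
   Context: Conventions: a path in $W$ is a continuous map $[0,1]\to W$; $P(W)$ is the set of paths; $p\cdot q$ is concatenation; homotopies of paths are relative to $\{0,1\}$, $\sim$ denotes homotopy. $G$ has unit $1$. For $Y\subset W$: a $0$-cochain of $(W,Y)$ is $c\colon W\to G$ with $c|_Y=1$, forming a group $C^0(W,Y)$ under pointwise multiplication. A $1$-cochain is $u\colon P(W)\to G$ with $u(p)=1$ for paths in $Y$; a cocycle satisfies $u(p)=u(q)$ if $p\sim q$ and $u(p\cdot q)=u(p)u(q)$ when defined. $C^0(W,Y)$ acts on cocycles by $(c\bullet u)(p)=c(p(0))u(p)c(p(1))^{-1}$; $H^1(W,Y)$ is the orbit set; $(W,b)=(W,\{b\})$. For $S\subset W$, $r_S\colon H^1(W,Y)\to H^1(S,Y\cap S)$ is induced by restricting cocycles to paths in $S$. *)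

theory Defs
  imports "HOL-Analysis.Analysis" "HOL-Algebra.Group"
begin

text \<open>Paths in (the topological space) T are maps [0,1] -> T, i.e. pathin T.
  A subset W of X is represented by the subspace topology subtopology X W.\<close>

definition pjoin :: "(real \<Rightarrow> 'a) \<Rightarrow> (real \<Rightarrow> 'a) \<Rightarrow> real \<Rightarrow> 'a" where
  "pjoin p q = (\<lambda>t. if t \<le> 1/2 then p (2 * t) else q (2 * t - 1))"

definition path_homotopic :: "'a topology \<Rightarrow> (real \<Rightarrow> 'a) \<Rightarrow> (real \<Rightarrow> 'a) \<Rightarrow> bool" where
  "path_homotopic T p q \<longleftrightarrow>
     homotopic_with (\<lambda>r. r 0 = p 0 \<and> r 1 = p 1) (top_of_set {0..1}) T p q"

definition cochain0 :: "('g,'b) monoid_scheme \<Rightarrow> 'a topology \<Rightarrow> 'a set \<Rightarrow> ('a \<Rightarrow> 'g) set" where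
  "cochain0 G T Y = {c. (\<forall>x\<in>topspace T. c x \<in> carrier G)
                      \<and> (\<forall>x\<in>Y. c x = \<one>\<^bsub>G\<^esub>)
                      \<and> (\<forall>x. x \<notin> topspace T \<longrightarrow> c x = \<one>\<^bsub>G\<^esub>)}"

definition cocycle :: "('g,'b) monoid_scheme \<Rightarrow> 'a topology \<Rightarrow> 'a set \<Rightarrow> ((real \<Rightarrow> 'a) \<Rightarrow> 'g) set" where
  "cocycle G T Y = {u.
      (\<forall>p. pathin T p \<longrightarrow> u p \<in> carrier G)
    \<and> (\<forall>p. \<not> pathin T p \<longrightarrow> u p = \<one>\<^bsub>G\<^esub>)
    \<and> (\<forall>p. pathin T p \<and> p ` {0..1} \<subseteq> Y \<longrightarrow> u p = \<one>\<^bsub>G\<^esub>)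
    \<and> (\<forall>p q. pathin T p \<and> pathin T q \<and> path_homotopic T p q \<longrightarrow> u p = u q)
    \<and> (\<forall>p q. pathin T p \<and> pathin T q \<and> p 1 = q 0 \<longrightarrow> u (pjoin p q) = u p \<otimes>\<^bsub>G\<^esub> u q)}"

definition cact :: "('g,'b) monoid_scheme \<Rightarrow> 'a topology \<Rightarrow> ('a \<Rightarrow> 'g) \<Rightarrow> ((real \<Rightarrow> 'a) \<Rightarrow> 'g)
                    \<Rightarrow> (real \<Rightarrow> 'a) \<Rightarrow> 'g" where
  "cact G T c u = (\<lambda>p. if pathin T p
        then c (p 0) \<otimes>\<^bsub>G\<^esub> u p \<otimes>\<^bsub>G\<^esub> inv\<^bsub>G\<^esub> (c (p 1)) else \<one>\<^bsub>G\<^esub>)"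

definition cls :: "('g,'b) monoid_scheme \<Rightarrow> 'a topology \<Rightarrow> 'a set \<Rightarrow> ((real \<Rightarrow> 'a) \<Rightarrow> 'g)
                   \<Rightarrow> ((real \<Rightarrow> 'a) \<Rightarrow> 'g) set" where
  "cls G T Y u = {cact G T c u | c. c \<in> cochain0 G T Y}"

definition H1 :: "('g,'b) monoid_scheme \<Rightarrow> 'a topology \<Rightarrow> 'a set \<Rightarrow> ((real \<Rightarrow> 'a) \<Rightarrow> 'g) set set" where
  "H1 G T Y = cls G T Y ` cocycle G T Y"

definition restr :: "('g,'b) monoid_scheme \<Rightarrow> 'a topology \<Rightarrow> 'a set \<Rightarrow> ((real \<Rightarrow> 'a) \<Rightarrow> 'g)
                     \<Rightarrow> (real \<Rightarrow> 'a) \<Rightarrow> 'g" where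
  "restr G T S u = (\<lambda>p. if pathin (subtopology T S) p then u p else \<one>\<^bsub>G\<^esub>)"

definition rmap :: "('g,'b) monoid_scheme \<Rightarrow> 'a topology \<Rightarrow> 'a set \<Rightarrow> 'a set
                    \<Rightarrow> ((real \<Rightarrow> 'a) \<Rightarrow> 'g) set \<Rightarrow> ((real \<Rightarrow> 'a) \<Rightarrow> 'g) set" where
  "rmap G T S Y k = cls G (subtopology T S) (Y \<inter> S) (restr G T S (SOME u. u \<in> k))"

end

theory Submission
  imports Defs
begin

text \<open>
  Cocycles on U and on V that agree on paths in U \<inter> V glue to a cocycle on X: on a path of X
  take the ordered product of the values on the pieces of a subdivision fine enough for every
  piece to lie in U or in V (Lebesgue number lemma).  Refining a subdivision does not change this
  product, and homotopy invariance is checked cell by cell on a grid fine enough for every cell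
  of the homotopy square to be mapped into U or into V.  Given classes on U and V with the same
  restriction to U \<inter> V, the cochain relating their representatives on U \<inter> V extends by 1 to V,
  so the representatives can be chosen to agree on U \<inter> V and then glued.  Conversely, if two
  cocycles on X become cohomologous on U and on V through cochains c and d, then c and d agree at
  every point of U \<inter> V joined inside U \<inter> V to a point of Y, since both are trivial on Y; so they
  patch to a cochain on X.  Finally, every path and every homotopy in U \<inter> V stays in one path
  component, so cocycles and cochains on U \<inter> V are just families indexed by the components.
\<close>

section \<open>Paths\<close>

lemma pjoin_0 [simp]: "pjoin p q 0 = p 0" and pjoin_1 [simp]: "pjoin p q 1 = q 1"
  by (simp_all add: pjoin_def)

lemma comp_pjoin: "f \<circ> pjoin p q = pjoin (f \<circ> p) (f \<circ> q)"
  by (auto simp: pjoin_def fun_eq_iff)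

lemma pjoin_eq_joinpaths: "pjoin p q = p +++ q"
  by (simp add: pjoin_def joinpaths_def)

lemma pathin_pjoin:
  assumes p: "pathin T p" and q: "pathin T q" and pq: "p 1 = q 0"
  shows "pathin T (pjoin p q)"
proof -
  let ?I = "top_of_set {0..1::real}"
  let ?f = "\<lambda>x. if id x \<le> (\<lambda>_. 1/2) x then (p \<circ> (\<lambda>t. 2*t)) x else (q \<circ> (\<lambda>t. 2*t - 1)) x"
  have "continuous_map ?I T ?f"
  proof (rule continuous_map_cases_le)
    show "continuous_map ?I euclideanreal id" by simp
    show "continuous_map ?I euclideanreal (\<lambda>_. 1/2)" by simp
    have left: "subtopology ?I {x \<in> topspace ?I. id x \<le> 1/2} = top_of_set {0..1/2}"
      by (simp add: subtopology_subtopology, intro arg_cong[where f="top_of_set"]) auto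
    have "continuous_map (top_of_set {0..1/2}) ?I (\<lambda>t. 2*t)"
      unfolding continuous_map_subtopology_eu by (rule conjI, (intro continuous_intros)[1], auto)
    then show "continuous_map (subtopology ?I {x \<in> topspace ?I. id x \<le> 1/2}) T (p \<circ> (\<lambda>t. 2*t))"
      unfolding left using p pathin_def continuous_map_compose by blast
    have right: "subtopology ?I {x \<in> topspace ?I. 1/2 \<le> id x} = top_of_set {1/2..1}"
      by (simp add: subtopology_subtopology, intro arg_cong[where f="top_of_set"]) auto
    have "continuous_map (top_of_set {1/2..1}) ?I (\<lambda>t. 2*t - 1)"
      unfolding continuous_map_subtopology_eu by (rule conjI, (intro continuous_intros)[1], auto)
    then show "continuous_map (subtopology ?I {x \<in> topspace ?I. 1/2 \<le> id x}) T (q \<circ> (\<lambda>t. 2*t - 1))"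
      unfolding right using q pathin_def continuous_map_compose by blast
  qed (use pq in \<open>auto simp: mult.commute\<close>)
  moreover have "?f = pjoin p q" by (auto simp: pjoin_def fun_eq_iff)
  ultimately show ?thesis by (simp add: pathin_def)
qed

lemma pathin_cong:
  assumes "pathin T p" "\<And>t. t \<in> {0..1} \<Longrightarrow> p t = q t"
  shows "pathin T q"
  using assms unfolding pathin_def by (auto elim!: continuous_map_eq)

lemma path_homotopic_cong:
  assumes "pathin T p" "\<And>t. t \<in> {0..1} \<Longrightarrow> p t = q t"
  shows "path_homotopic T p q"
  unfolding path_homotopic_def
  by (rule homotopic_with_equal) (use assms in \<open>auto simp: pathin_def\<close>)

lemma path_homotopic_endpoints:
  assumes "path_homotopic T p q" shows "q 0 = p 0" "q 1 = p 1"
  using homotopic_with_imp_property[OF assms[unfolded path_homotopic_def]] by auto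

lemma path_homotopic_imp_pathin:
  assumes "path_homotopic T p q" shows "pathin T p" "pathin T q"
  using homotopic_with_imp_continuous_maps[OF assms[unfolded path_homotopic_def]]
  by (auto simp: pathin_def)

lemma path_homotopic_subtopologyD:
  "path_homotopic (subtopology T S) p q \<Longrightarrow> path_homotopic T p q"
  unfolding path_homotopic_def homotopic_with_def
  using continuous_map_into_fulltopology by blast

lemma pathin_linepath:
  fixes C :: "'v::real_normed_vector set"
  assumes "convex C" "a \<in> C" "b \<in> C"
  shows "pathin (top_of_set C) (linepath a b)"
proof -
  have "linepath a b t \<in> C" if "t \<in> {0..1}" for t
    using assms linepath_in_path[OF that] convex_contains_segment by blast
  then show ?thesis by (simp add: pathin_canon_iff)
qed

lemma path_homotopic_linepath_pjoin:
  fixes C :: "'v::real_normed_vector set"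
  assumes C: "convex C" and H: "continuous_map (top_of_set C) T H"
    and abc: "a \<in> C" "b \<in> C" "c \<in> C"
  shows "path_homotopic T (H \<circ> linepath a c) (pjoin (H \<circ> linepath a b) (H \<circ> linepath b c))"
proof -
  have "pathin (top_of_set C) (linepath a b +++ linepath b c)"
    using pathin_pjoin[OF pathin_linepath[OF C abc(1,2)] pathin_linepath[OF C abc(2,3)]]
    by (simp add: pjoin_eq_joinpaths linepath_def)
  then have "homotopic_paths C (linepath a c) (linepath a b +++ linepath b c)"
    using pathin_linepath[OF C abc(1,3)] C
    by (intro homotopic_paths_linear) (auto simp: pathin_canon_iff convex_contains_segment Pi_iff)
  then have "path_homotopic T (H \<circ> linepath a c) (H \<circ> (linepath a b +++ linepath b c))"
    unfolding homotopic_paths_def path_homotopic_def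
    by (rule homotopic_with_compose_continuous_map_left[OF _ H]) (auto simp: pathstart_def pathfinish_def)
  then show ?thesis by (simp add: comp_pjoin flip: pjoin_eq_joinpaths)
qed

lemma linepath_start [simp]: "linepath a b 0 = a" and linepath_end [simp]: "linepath a b 1 = b"
  by (simp_all add: linepath_def)

lemma linepath_Pair: "linepath (a, b) (c, d) t = (linepath a c t, linepath b d t)"
  by (simp add: linepath_def)

lemma pathin_path_component:
  assumes "pathin T \<gamma>"
  obtains C where "C \<in> path_components_of T" "\<gamma> ` {0..1} \<subseteq> C"
proof -
  obtain C where C: "C \<in> path_components_of T" "\<gamma> 0 \<in> C"
    using path_start_in_topspace[OF assms] Union_path_components_of[of T] by blast
  have "\<gamma> ` {0..1} \<subseteq> C"
    using path_components_of_maximal[OF C(1) path_connectedin_path_image[OF assms]] C(2)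
    by (force simp: disjnt_def)
  with C(1) show thesis by (rule that)
qed

lemma path_homotopic_path_component:
  assumes h: "path_homotopic T p q" and C: "C \<in> path_components_of T" and p0: "p 0 \<in> C"
  shows "path_homotopic (subtopology T C) p q"
proof -
  obtain h :: "real \<times> real \<Rightarrow> 'a" where hc: "continuous_map (top_of_set ({0..1} \<times> {0..1})) T h"
    and H: "(\<forall>x. h (0, x) = p x) \<and> (\<forall>x. h (1, x) = q x)
      \<and> (\<forall>t\<in>{0..1}. h (t, 0) = p 0 \<and> h (t, 1) = p 1)"
    using h unfolding path_homotopic_def homotopic_with_def by auto
  have "path_connectedin T (h ` ({0..1} \<times> {0..1}))"
    by (rule path_connectedin_continuous_map_image[OF hc])
      (simp add: path_connectedin_subtopology convex_imp_path_connected convex_Times)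
  moreover have "p 0 \<in> h ` ({0..1} \<times> {0..1})"
    using H by (metis SigmaI atLeastAtMost_iff image_eqI order_refl zero_le_one)
  ultimately have "h ` ({0..1} \<times> {0..1}) \<subseteq> C"
    using path_components_of_maximal[OF C] p0 by (auto simp: disjnt_def)
  with hc have "continuous_map (top_of_set ({0..1} \<times> {0..1})) (subtopology T C) h"
    by (simp add: continuous_map_in_subtopology image_subset_iff_funcset)
  with H show ?thesis
    unfolding path_homotopic_def homotopic_with_def by (intro exI[of _ h]) simp
qed

section \<open>Subdivisions of paths\<close>

definition subdiv_interval :: "nat \<Rightarrow> nat \<Rightarrow> real set" where
  "subdiv_interval n k = {real k / real n .. real (Suc k) / real n}"

definition piece :: "nat \<Rightarrow> nat \<Rightarrow> (real \<Rightarrow> 'a) \<Rightarrow> real \<Rightarrow> 'a" where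
  "piece n k \<gamma> = \<gamma> \<circ> linepath (real k / real n) (real (Suc k) / real n)"

lemma subdiv_interval_subset: "k < n \<Longrightarrow> subdiv_interval n k \<subseteq> {0..1}"
  by (auto simp: subdiv_interval_def field_simps)

lemma piece_image: "k < n \<Longrightarrow> piece n k \<gamma> ` {0..1} = \<gamma> ` subdiv_interval n k"
  unfolding piece_def subdiv_interval_def image_comp [symmetric]
  by (simp add: linepath_image_01 closed_segment_eq_real_ivl divide_right_mono)

lemma pathin_piece:
  assumes "pathin T \<gamma>" "k < n"
  shows "pathin T (piece n k \<gamma>)"
proof -
  have "pathin (top_of_set {0..1}) (linepath (real k / real n) (real (Suc k) / real n))"
    using assms(2) by (intro pathin_linepath) (auto simp: field_simps)
  then show ?thesis
    using assms(1) unfolding piece_def pathin_def by (rule continuous_map_compose)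
qed

lemma piece_piece:
  assumes "0 < n" "0 < m"
  shows "piece m i (piece n k \<gamma>) = piece (n * m) (k * m + i) \<gamma>"
proof -
  have "linepath (real k / real n) (real (Suc k) / real n) (linepath (real j / real m) (real (Suc j) / real m) t)
      = linepath (real (k * m + j) / real (n * m)) (real (Suc (k * m + j)) / real (n * m)) t" for j t
    using assms by (simp add: linepath_def field_simps)
  then show ?thesis by (simp add: piece_def fun_eq_iff)
qed

lemma piece_apply:
  assumes "0 < n" shows "piece n k \<gamma> t = \<gamma> ((real k + t) / real n)"
proof -
  have "linepath (real k / real n) (real (Suc k) / real n) t = (real k + t) / real n"
    using assms by (simp add: linepath_def field_simps)
  then show ?thesis by (simp add: piece_def)
qed

lemma piece_pjoin_left:
  assumes k: "k < n" and t: "t \<in> {0..1}"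
  shows "piece (2 * n) k (pjoin \<gamma> \<delta>) t = piece n k \<gamma> t"
proof -
  have "real k + 1 \<le> real n" using k by linarith
  then have "(real k + t) / real (2 * n) \<le> 1/2" using t k by (simp add: field_simps)
  moreover have "2 * ((real k + t) / real (2 * n)) = (real k + t) / real n"
    using k by (simp add: field_simps)
  ultimately show ?thesis using k by (simp add: piece_apply pjoin_def)
qed

lemma piece_pjoin_right:
  assumes i: "i < n" and t: "t \<in> {0..1}" and e: "\<gamma> 1 = \<delta> 0"
  shows "piece (2 * n) (n + i) (pjoin \<gamma> \<delta>) t = piece n i \<delta> t"
proof (cases "i = 0 \<and> t = 0")
  case True
  then show ?thesis using e i by (simp add: piece_def pjoin_def)
next
  case False
  then have "0 < real i + t" using t by auto
  then have "\<not> (real (n + i) + t) / real (2 * n) \<le> 1/2" using i by (simp add: field_simps)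
  moreover have "2 * ((real (n + i) + t) / real (2 * n)) - 1 = (real i + t) / real n"
    using i by (simp add: field_simps)
  ultimately show ?thesis using i by (simp add: piece_apply pjoin_def)
qed

lemma piece_slice:
  "piece n k (\<lambda>t. h (s, t)) = h \<circ> linepath (s, real k / real n) (s, real (Suc k) / real n)"
  by (simp add: piece_def linepath_def fun_eq_iff algebra_simps)

lemma diameter_subdiv_cell:
  assumes "0 < n"
  shows "diameter (subdiv_interval n j \<times> subdiv_interval n k) \<le> 2 / real n"
proof (rule diameter_le)
  have width: "\<bar>x - y\<bar> \<le> 1 / real n" if "x \<in> subdiv_interval n i" "y \<in> subdiv_interval n i" for x y i
  proof -
    have "real (Suc i) / real n - real i / real n = 1 / real n" using assms by (simp add: field_simps)
    then show ?thesis using that by (auto simp: subdiv_interval_def)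
  qed
  fix x y assume "x \<in> subdiv_interval n j \<times> subdiv_interval n k" "y \<in> subdiv_interval n j \<times> subdiv_interval n k"
  then have "norm (fst x - fst y) + norm (snd x - snd y) \<le> 1 / real n + 1 / real n"
    by (intro add_mono) (auto simp: width mem_Times_iff)
  moreover have "x - y = (fst x - fst y, snd x - snd y)" by (simp add: prod_eq_iff)
  then have "norm (x - y) \<le> norm (fst x - fst y) + norm (snd x - snd y)"
    using norm_Pair_le[of "fst x - fst y" "snd x - snd y"] by simp
  ultimately show "norm (x - y) \<le> 2 / real n" by simp
qed (use assms in simp)

lemma strip_cell:
  fixes S :: "real set"
  assumes "convex S" "continuous_map (top_of_set (S \<times> {0..1})) T h" "k < n"
  shows "convex (S \<times> subdiv_interval n k)" "continuous_map (top_of_set (S \<times> subdiv_interval n k)) T h"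
proof -
  have "S \<times> subdiv_interval n k \<subseteq> S \<times> {0..1}" using subdiv_interval_subset[OF assms(3)] by auto
  then show "continuous_map (top_of_set (S \<times> subdiv_interval n k)) T h"
    using continuous_map_from_subtopology_mono[OF assms(2)] by blast
qed (use assms(1) in \<open>simp add: convex_Times subdiv_interval_def\<close>)

lemma slice_endpoints_in_cell:
  assumes "s \<in> S"
  shows "(s, real k / real n) \<in> S \<times> subdiv_interval n k"
    and "(s, real (Suc k) / real n) \<in> S \<times> subdiv_interval n k"
  using assms by (auto simp: subdiv_interval_def divide_right_mono)

section \<open>Ordered products in a monoid\<close>

primrec ordered_prod :: "('g,'b) monoid_scheme \<Rightarrow> (nat \<Rightarrow> 'g) \<Rightarrow> nat \<Rightarrow> 'g" where
  "ordered_prod G f 0 = \<one>\<^bsub>G\<^esub>"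
| "ordered_prod G f (Suc n) = ordered_prod G f n \<otimes>\<^bsub>G\<^esub> f n"

context monoid
begin

lemma ordered_prod_closed: "(\<And>k. k < n \<Longrightarrow> f k \<in> carrier G) \<Longrightarrow> ordered_prod G f n \<in> carrier G"
  by (induction n) auto

lemma ordered_prod_cong: "(\<And>k. k < n \<Longrightarrow> f k = g k) \<Longrightarrow> ordered_prod G f n = ordered_prod G g n"
  by (induction n) auto

lemma ordered_prod_add:
  assumes "\<And>k. k < a + b \<Longrightarrow> f k \<in> carrier G"
  shows "ordered_prod G f (a + b) = ordered_prod G f a \<otimes> ordered_prod G (\<lambda>i. f (a + i)) b"
  using assms
proof (induction b)
  case 0
  then show ?case by (simp add: ordered_prod_closed)
next
  case (Suc b)
  then show ?case by (simp add: m_assoc ordered_prod_closed)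
qed

lemma ordered_prod_blocks:
  assumes "\<And>k. k < n * m \<Longrightarrow> f k \<in> carrier G"
  shows "ordered_prod G f (n * m) = ordered_prod G (\<lambda>k. ordered_prod G (\<lambda>i. f (k * m + i)) m) n"
  using assms
proof (induction n)
  case (Suc n)
  have "ordered_prod G f (n * m + m) = ordered_prod G f (n * m) \<otimes> ordered_prod G (\<lambda>i. f (n * m + i)) m"
    using Suc.prems by (intro ordered_prod_add) auto
  then show ?case using Suc by (simp add: add.commute)
qed simp

end

lemma (in group) ordered_prod_telescope:
  assumes "\<And>k. k \<le> n \<Longrightarrow> a k \<in> carrier G" "\<And>k. k < n \<Longrightarrow> b k \<in> carrier G"
  shows "ordered_prod G (\<lambda>k. a k \<otimes> b k \<otimes> inv (a (Suc k))) n = a 0 \<otimes> ordered_prod G b n \<otimes> inv (a n)"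
  using assms
proof (induction n)
  case (Suc n)
  then have "a n \<in> carrier G" "a (Suc n) \<in> carrier G" "b n \<in> carrier G" "a 0 \<in> carrier G"
    "ordered_prod G b n \<in> carrier G"
    by (auto intro: ordered_prod_closed)
  moreover from this have "inv (a n) \<otimes> (a n \<otimes> (b n \<otimes> inv (a (Suc n)))) = b n \<otimes> inv (a (Suc n))"
    by (metis l_inv m_assoc l_one inv_closed m_closed)
  ultimately show ?case using Suc by (simp add: m_assoc)
qed simp

section \<open>Cocycles, cochains and restriction\<close>

lemma
  assumes "u \<in> cocycle G T Y"
  shows cocycle_closed: "pathin T p \<Longrightarrow> u p \<in> carrier G"
    and cocycle_nonpath: "\<not> pathin T p \<Longrightarrow> u p = \<one>\<^bsub>G\<^esub>"
    and cocycle_base: "pathin T p \<Longrightarrow> p ` {0..1} \<subseteq> Y \<Longrightarrow> u p = \<one>\<^bsub>G\<^esub>"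
    and cocycle_homotopic: "path_homotopic T p q \<Longrightarrow> u p = u q"
    and cocycle_pjoin: "pathin T p \<Longrightarrow> pathin T q \<Longrightarrow> p 1 = q 0 \<Longrightarrow> u (pjoin p q) = u p \<otimes>\<^bsub>G\<^esub> u q"
  using assms path_homotopic_imp_pathin[of T p q] by (auto simp: cocycle_def)

lemma cocycle_cong:
  assumes "u \<in> cocycle G T Y" "pathin T p" "\<And>t. t \<in> {0..1} \<Longrightarrow> p t = q t"
  shows "u p = u q"
  using assms cocycle_homotopic path_homotopic_cong by metis

lemma cocycle_linepath_triangle:
  fixes C :: "'v::real_normed_vector set"
  assumes u: "u \<in> cocycle G T Y" and C: "convex C" and H: "continuous_map (top_of_set C) T H"
    and abc: "a \<in> C" "b \<in> C" "c \<in> C"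
  shows "u (H \<circ> linepath a c) = u (H \<circ> linepath a b) \<otimes>\<^bsub>G\<^esub> u (H \<circ> linepath b c)"
proof -
  have "pathin T (H \<circ> linepath x y)" if "x \<in> C" "y \<in> C" for x y
    using pathin_compose[OF pathin_linepath[OF C that] H] .
  then show ?thesis
    using cocycle_homotopic[OF u path_homotopic_linepath_pjoin[OF C H abc]] cocycle_pjoin[OF u] abc
    by simp
qed

context group
begin

lemma cocycle_const:
  assumes u: "u \<in> cocycle G T Y" and x: "x \<in> topspace T"
  shows "u (\<lambda>t. x) = \<one>"
proof -
  have "pjoin (\<lambda>t. x) (\<lambda>t. x) = (\<lambda>t. x)" by (simp add: pjoin_def)
  then have "u (\<lambda>t. x) \<otimes> u (\<lambda>t. x) = u (\<lambda>t. x)"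
    using cocycle_pjoin[OF u, of "\<lambda>t. x" "\<lambda>t. x"] x by simp
  then show ?thesis using cocycle_closed[OF u, of "\<lambda>t. x"] x by simp
qed

lemma cocycle_subdivision:
  assumes u: "u \<in> cocycle G T Y" and \<gamma>: "pathin T \<gamma>" and n: "0 < n"
  shows "u \<gamma> = ordered_prod G (\<lambda>k. u (piece n k \<gamma>)) n"
proof -
  have \<gamma>': "continuous_map (top_of_set {0..1}) T \<gamma>" using \<gamma> by (simp add: pathin_def)
  have "u (\<gamma> \<circ> linepath 0 (real k / real n)) = ordered_prod G (\<lambda>k. u (piece n k \<gamma>)) k" if "k \<le> n" for k
    using that
  proof (induction k)
    case 0
    then show ?case
      using cocycle_const[OF u path_start_in_topspace[OF \<gamma>]] by (simp add: linepath_refl o_def)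
  next
    case (Suc k)
    then have "u (\<gamma> \<circ> linepath 0 (real (Suc k) / real n))
        = u (\<gamma> \<circ> linepath 0 (real k / real n)) \<otimes> u (piece n k \<gamma>)"
      unfolding piece_def using n
      by (intro cocycle_linepath_triangle[OF u _ \<gamma>']) (auto simp: field_simps)
    also have "u (\<gamma> \<circ> linepath 0 (real k / real n)) = ordered_prod G (\<lambda>k. u (piece n k \<gamma>)) k"
      using Suc.prems by (intro Suc.IH) simp
    finally show ?case by (simp only: ordered_prod.simps)
  qed
  from this[of n] n show ?thesis
    using cocycle_cong[OF u \<gamma>, of "\<gamma> \<circ> linepath 0 1"] by (simp add: linepath_def)
qed

lemma
  assumes "c \<in> cochain0 G T Y"
  shows cochain0_closed: "c x \<in> carrier G"
    and cochain0_base: "x \<in> Y \<Longrightarrow> c x = \<one>"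
  using assms by (auto simp: cochain0_def)

lemma cochain0_one: "(\<lambda>x. \<one>) \<in> cochain0 G T Y"
  by (simp add: cochain0_def)

lemma cochain0_mult:
  "c \<in> cochain0 G T Y \<Longrightarrow> d \<in> cochain0 G T Y \<Longrightarrow> (\<lambda>x. c x \<otimes> d x) \<in> cochain0 G T Y"
  by (simp add: cochain0_def)

lemma cochain0_inv: "c \<in> cochain0 G T Y \<Longrightarrow> (\<lambda>x. inv (c x)) \<in> cochain0 G T Y"
  by (simp add: cochain0_def)

lemma cochain0_extend:
  assumes "c \<in> cochain0 G (subtopology T S) Y" "Y' \<inter> S \<subseteq> Y"
  shows "c \<in> cochain0 G T Y'"
  using assms by (auto simp: cochain0_def)

lemma cact_cocycle:
  assumes c: "c \<in> cochain0 G T Y" and u: "u \<in> cocycle G T Y"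
  shows "cact G T c u \<in> cocycle G T Y"
  unfolding cocycle_def mem_Collect_eq
proof (intro conjI allI impI)
  fix p assume p: "pathin T p \<and> p ` {0..1} \<subseteq> Y"
  then have "p 0 \<in> Y" "p 1 \<in> Y" by auto
  with p show "cact G T c u p = \<one>"
    by (simp add: cact_def cochain0_base[OF c] cocycle_base[OF u])
next
  fix p q assume pq: "pathin T p \<and> pathin T q \<and> p 1 = q 0"
  have cl: "c (p 0) \<in> carrier G" "c (q 0) \<in> carrier G" "c (q 1) \<in> carrier G"
    "u p \<in> carrier G" "u q \<in> carrier G"
    using pq by (auto simp: cochain0_closed[OF c] cocycle_closed[OF u])
  then have "inv (c (q 0)) \<otimes> (c (q 0) \<otimes> (u q \<otimes> inv (c (q 1)))) = u q \<otimes> inv (c (q 1))"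
    by (metis l_inv m_assoc l_one inv_closed m_closed)
  with pq cl show "cact G T c u (pjoin p q) = cact G T c u p \<otimes> cact G T c u q"
    by (simp add: cact_def pathin_pjoin cocycle_pjoin[OF u] m_assoc)
qed (use c u in \<open>auto simp: cact_def cochain0_closed cocycle_closed
      cocycle_homotopic path_homotopic_endpoints\<close>)

lemma cact_one: "u \<in> cocycle G T Y \<Longrightarrow> cact G T (\<lambda>x. \<one>) u = u"
  by (auto simp: cact_def fun_eq_iff cocycle_closed cocycle_nonpath)

lemma cact_cact:
  assumes "c \<in> cochain0 G T Y" "d \<in> cochain0 G T Y" "u \<in> cocycle G T Y"
  shows "cact G T c (cact G T d u) = cact G T (\<lambda>x. c x \<otimes> d x) u"
  using assms by (auto simp: cact_def fun_eq_iff m_assoc inv_mult_group cochain0_closed cocycle_closed)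

lemma cls_refl: "u \<in> cocycle G T Y \<Longrightarrow> u \<in> cls G T Y u"
  unfolding cls_def using cact_one cochain0_one by (metis (mono_tags, lifting) mem_Collect_eq)

lemma cls_eq_iff:
  assumes u: "u \<in> cocycle G T Y" and v: "v \<in> cocycle G T Y"
  shows "cls G T Y v = cls G T Y u \<longleftrightarrow> (\<exists>c \<in> cochain0 G T Y. v = cact G T c u)"
proof
  assume "cls G T Y v = cls G T Y u"
  then show "\<exists>c \<in> cochain0 G T Y. v = cact G T c u"
    using cls_refl[OF v] by (auto simp: cls_def)
next
  assume "\<exists>c \<in> cochain0 G T Y. v = cact G T c u"
  then obtain c where c: "c \<in> cochain0 G T Y" and vc: "v = cact G T c u" by blast
  have "cact G T d v \<in> cls G T Y u" if "d \<in> cochain0 G T Y" for d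
    unfolding cls_def vc cact_cact[OF that c u] using cochain0_mult[OF that c] by blast
  moreover have "cact G T d u \<in> cls G T Y v" if d: "d \<in> cochain0 G T Y" for d
  proof -
    have "(\<lambda>x. (d x \<otimes> inv (c x)) \<otimes> c x) = d"
      using cochain0_closed[OF c] cochain0_closed[OF d] by (simp add: fun_eq_iff m_assoc)
    then have "cact G T d u = cact G T (\<lambda>x. d x \<otimes> inv (c x)) v"
      using cact_cact[OF cochain0_mult[OF d cochain0_inv[OF c]] c u] by (simp add: vc)
    then show ?thesis
      unfolding cls_def using cochain0_mult[OF d cochain0_inv[OF c]] by blast
  qed
  ultimately show "cls G T Y v = cls G T Y u" by (auto simp: cls_def)
qed

end

lemma H1E:
  assumes "k \<in> H1 G T Y"
  obtains u where "u \<in> cocycle G T Y" "k = cls G T Y u"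
  using assms by (auto simp: H1_def)

lemma cls_in_H1: "u \<in> cocycle G T Y \<Longrightarrow> cls G T Y u \<in> H1 G T Y"
  by (simp add: H1_def)

lemma restr_cocycle:
  assumes u: "u \<in> cocycle G T Y"
  shows "restr G T S u \<in> cocycle G (subtopology T S) (Y \<inter> S)"
  unfolding cocycle_def mem_Collect_eq
proof (intro conjI allI impI)
  fix p q assume "pathin (subtopology T S) p \<and> pathin (subtopology T S) q
    \<and> path_homotopic (subtopology T S) p q"
  then show "restr G T S u p = restr G T S u q"
    unfolding restr_def using cocycle_homotopic[OF u path_homotopic_subtopologyD] by auto
next
  fix p q assume pq: "pathin (subtopology T S) p \<and> pathin (subtopology T S) q \<and> p 1 = q 0"
  then have "pathin (subtopology T S) (pjoin p q)" by (simp add: pathin_pjoin)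
  with pq show "restr G T S u (pjoin p q) = restr G T S u p \<otimes>\<^bsub>G\<^esub> restr G T S u q"
    using cocycle_pjoin[OF u] by (simp add: restr_def pathin_subtopology)
qed (use u in \<open>auto simp: restr_def pathin_subtopology cocycle_closed cocycle_base\<close>)

lemma restr_restr: "restr G (subtopology T S) S' (restr G T S u) = restr G T (S \<inter> S') u"
  by (auto simp: restr_def fun_eq_iff subtopology_subtopology pathin_subtopology)

definition cochain_restr :: "('g,'b) monoid_scheme \<Rightarrow> 'a topology \<Rightarrow> 'a set \<Rightarrow> ('a \<Rightarrow> 'g) \<Rightarrow> 'a \<Rightarrow> 'g" where
  "cochain_restr G T S c = (\<lambda>x. if x \<in> topspace T \<inter> S then c x else \<one>\<^bsub>G\<^esub>)"

lemma restr_cact: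
  "restr G T S (cact G T c u) = cact G (subtopology T S) (cochain_restr G T S c) (restr G T S u)"
proof -
  have "p 0 \<in> topspace T \<inter> S" "p 1 \<in> topspace T \<inter> S" if "pathin (subtopology T S) p" for p
    using path_start_in_topspace[OF that] path_finish_in_topspace[OF that] by auto
  then show ?thesis
    by (auto simp: restr_def cact_def cochain_restr_def fun_eq_iff pathin_subtopology)
qed

lemma restr_eq_cactD:
  assumes "restr G T S w = cact G (subtopology T S) c (restr G T S w')"
    and "pathin (subtopology T S) \<sigma>"
  shows "w \<sigma> = c (\<sigma> 0) \<otimes>\<^bsub>G\<^esub> w' \<sigma> \<otimes>\<^bsub>G\<^esub> inv\<^bsub>G\<^esub> (c (\<sigma> 1))"
  using fun_cong[OF assms(1), of \<sigma>] assms(2) by (simp add: restr_def cact_def)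

context group
begin

lemma cochain_restr_cochain0:
  "c \<in> cochain0 G T Y \<Longrightarrow> cochain_restr G T S c \<in> cochain0 G (subtopology T S) (Y \<inter> S)"
  by (auto simp: cochain0_def cochain_restr_def)

lemma rmap_cls:
  assumes u: "u \<in> cocycle G T Y"
  shows "rmap G T S Y (cls G T Y u) = cls G (subtopology T S) (Y \<inter> S) (restr G T S u)"
proof -
  define v where "v = (SOME v. v \<in> cls G T Y u)"
  have "v \<in> cls G T Y u"
    unfolding v_def using cls_refl[OF u] by (rule someI[where P="\<lambda>v. v \<in> cls G T Y u"])
  then obtain c where c: "c \<in> cochain0 G T Y" and vc: "v = cact G T c u"
    by (auto simp: cls_def)
  have "cls G (subtopology T S) (Y \<inter> S) (restr G T S v)
      = cls G (subtopology T S) (Y \<inter> S) (restr G T S u)"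
    unfolding vc restr_cact
    using cochain_restr_cochain0[OF c] restr_cocycle[OF u]
      cact_cocycle[OF cochain_restr_cochain0[OF c] restr_cocycle[OF u]]
    by (subst cls_eq_iff) auto
  then show ?thesis unfolding rmap_def v_def .
qed

lemma rmap_in_H1: "k \<in> H1 G T Y \<Longrightarrow> rmap G T S Y k \<in> H1 G (subtopology T S) (Y \<inter> S)"
  by (auto elim!: H1E simp: rmap_cls restr_cocycle cls_in_H1)

lemma rmap_rmap:
  assumes "k \<in> H1 G T Y"
  shows "rmap G (subtopology T S) S' (Y \<inter> S) (rmap G T S Y k) = rmap G T (S \<inter> S') Y k"
  using assms
  by (auto elim!: H1E simp: rmap_cls restr_cocycle restr_restr subtopology_subtopology Int_assoc)

lemma rmap_square_commutes:
  assumes "k \<in> H1 G X Y"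
  shows "rmap G (subtopology X U) (U \<inter> V) (Y \<inter> U) (rmap G X U Y k)
       = rmap G (subtopology X V) (U \<inter> V) (Y \<inter> V) (rmap G X V Y k)"
proof -
  have "U \<inter> (U \<inter> V) = U \<inter> V" "V \<inter> (U \<inter> V) = U \<inter> V" by auto
  then show ?thesis using rmap_rmap[OF assms] by metis
qed

end

section \<open>Subdivisions subordinate to an open cover\<close>

locale two_open_cover =
  fixes X :: "'p topology" and U V :: "'p set"
  assumes openin_U: "openin X U" and openin_V: "openin X V" and topspace_eq: "topspace X = U \<union> V"
begin

definition small :: "'p set \<Rightarrow> bool" where
  "small S \<longleftrightarrow> S \<subseteq> U \<or> S \<subseteq> V"

definition small_path :: "(real \<Rightarrow> 'p) \<Rightarrow> bool" where
  "small_path \<sigma> \<longleftrightarrow> pathin (subtopology X U) \<sigma> \<or> pathin (subtopology X V) \<sigma>"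

definition fine_subdivision :: "(real \<Rightarrow> 'p) \<Rightarrow> nat \<Rightarrow> bool" where
  "fine_subdivision \<gamma> n \<longleftrightarrow> 0 < n \<and> (\<forall>k<n. small_path (piece n k \<gamma>))"

lemma small_path_iff: "small_path \<sigma> \<longleftrightarrow> pathin X \<sigma> \<and> small (\<sigma> ` {0..1})"
  by (auto simp: small_path_def small_def pathin_subtopology)

lemma small_path_pathin: "small_path \<sigma> \<Longrightarrow> pathin X \<sigma>"
  by (simp add: small_path_iff)

lemma small_path_cong: "small_path \<sigma> \<Longrightarrow> (\<And>t. t \<in> {0..1} \<Longrightarrow> \<sigma> t = \<sigma>' t) \<Longrightarrow> small_path \<sigma>'"
  unfolding small_path_def using pathin_cong by metis

lemma small_path_linepath:
  fixes C :: "'v::real_normed_vector set"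
  assumes C: "convex C" and h: "continuous_map (top_of_set C) X h" and small: "small (h ` C)"
    and ab: "a \<in> C" "b \<in> C"
  shows "small_path (h \<circ> linepath a b)"
proof -
  have lp: "pathin (top_of_set C) (linepath a b)" using C ab by (rule pathin_linepath)
  then have "linepath a b ` {0..1} \<subseteq> C" by (auto simp: pathin_canon_iff)
  then have "(h \<circ> linepath a b) ` {0..1} \<subseteq> h ` C" by (auto simp: image_comp [symmetric])
  with small have "small ((h \<circ> linepath a b) ` {0..1})" by (auto simp: small_def)
  with pathin_compose[OF lp h] show ?thesis by (simp add: small_path_iff)
qed

lemma Lebesgue_number:
  fixes S :: "'m::metric_space set"
  assumes S: "compact S" and f: "continuous_map (top_of_set S) X f"
  obtains \<delta> where "0 < \<delta>" "\<And>T. T \<subseteq> S \<Longrightarrow> diameter T < \<delta> \<Longrightarrow> small (f ` T)"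
proof -
  have "openin (top_of_set S) {x \<in> S. f x \<in> U}" "openin (top_of_set S) {x \<in> S. f x \<in> V}"
    using openin_continuous_map_preimage[OF f openin_U] openin_continuous_map_preimage[OF f openin_V]
    by auto
  then obtain O1 O2 where O: "open O1" "{x \<in> S. f x \<in> U} = S \<inter> O1" "open O2" "{x \<in> S. f x \<in> V} = S \<inter> O2"
    unfolding openin_open by metis
  have "S \<subseteq> \<Union>{O1, O2}"
  proof
    fix x assume x: "x \<in> S"
    then have "f x \<in> U \<or> f x \<in> V"
      using continuous_map_image_subset_topspace[OF f] topspace_eq by auto
    then show "x \<in> \<Union>{O1, O2}" using O x by blast
  qed
  then obtain \<delta> where \<delta>: "0 < \<delta>" "\<And>T. T \<subseteq> S \<Longrightarrow> diameter T < \<delta> \<Longrightarrow> \<exists>B \<in> {O1, O2}. T \<subseteq> B"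
    using Lebesgue_number_lemma[OF S, of "{O1, O2}"] O by auto
  show ?thesis
  proof (rule that[OF \<delta>(1)])
    fix T assume T: "T \<subseteq> S" "diameter T < \<delta>"
    then have "T \<subseteq> O1 \<or> T \<subseteq> O2" using \<delta>(2) by auto
    then show "small (f ` T)" using O T(1) unfolding small_def by blast
  qed
qed

lemma fine_exists:
  assumes \<gamma>: "pathin X \<gamma>"
  obtains n where "fine_subdivision \<gamma> n"
proof -
  obtain \<delta> where \<delta>: "0 < \<delta>" "\<And>T. T \<subseteq> {0..1} \<Longrightarrow> diameter T < \<delta> \<Longrightarrow> small (\<gamma> ` T)"
    using Lebesgue_number[OF compact_Icc] \<gamma> unfolding pathin_def by metis
  obtain n :: nat where n: "1 / \<delta> < n" using reals_Archimedean2 by blast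
  have "0 < n" using n \<delta>(1) by (metis of_nat_0_less_iff less_trans zero_less_divide_1_iff)
  with n \<delta>(1) have "1 / real n < \<delta>" by (simp add: field_simps)
  have "small_path (piece n k \<gamma>)" if k: "k < n" for k
  proof -
    have "diameter (subdiv_interval n k) = 1 / real n"
      using k by (simp add: subdiv_interval_def field_simps)
    then have "small (\<gamma> ` subdiv_interval n k)"
      using \<delta>(2) subdiv_interval_subset[OF k] \<open>1 / real n < \<delta>\<close> by simp
    then show ?thesis
      unfolding small_path_iff piece_image[OF k] using pathin_piece[OF \<gamma> k] by simp
  qed
  with \<open>0 < n\<close> show ?thesis using that by (auto simp: fine_subdivision_def)
qed

lemma fine_mult:
  assumes \<gamma>: "fine_subdivision \<gamma> n" and m: "0 < m"
  shows "fine_subdivision \<gamma> (n * m)"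
proof -
  have "small_path (piece (n * m) j \<gamma>)" if j: "j < n * m" for j
  proof -
    have "j div m < n" using j m by (simp add: less_mult_imp_div_less)
    then have "small_path (piece n (j div m) \<gamma>)" using \<gamma> by (simp add: fine_subdivision_def)
    then have "small_path (piece m (j mod m) (piece n (j div m) \<gamma>))"
      using m pathin_piece unfolding small_path_def by (meson mod_less_divisor)
    then show ?thesis using \<gamma> m by (simp add: fine_subdivision_def piece_piece)
  qed
  then show ?thesis using \<gamma> m by (simp add: fine_subdivision_def)
qed

lemma fine_common:
  assumes "pathin X \<gamma>" "pathin X \<delta>"
  shows "\<exists>n. fine_subdivision \<gamma> n \<and> fine_subdivision \<delta> n"
proof -
  obtain n1 where n1: "fine_subdivision \<gamma> n1" using assms(1) by (rule fine_exists)
  obtain n2 where n2: "fine_subdivision \<delta> n2" using assms(2) by (rule fine_exists)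
  have "fine_subdivision \<gamma> (n1 * n2)"
    using n2 by (intro fine_mult[OF n1]) (simp add: fine_subdivision_def)
  moreover have "fine_subdivision \<delta> (n2 * n1)"
    using n1 by (intro fine_mult[OF n2]) (simp add: fine_subdivision_def)
  ultimately show ?thesis by (intro exI[of _ "n1 * n2"]) (simp add: mult.commute)
qed

lemma fine_pjoin:
  assumes \<gamma>: "fine_subdivision \<gamma> n" and \<delta>: "fine_subdivision \<delta> n" and e: "\<gamma> 1 = \<delta> 0"
  shows "fine_subdivision (pjoin \<gamma> \<delta>) (2 * n)"
proof -
  have "small_path (piece (2 * n) j (pjoin \<gamma> \<delta>))" if j: "j < 2 * n" for j
  proof (cases "j < n")
    case True
    show ?thesis
      by (rule small_path_cong[of "piece n j \<gamma>"])
        (use \<gamma> True piece_pjoin_left[OF True, of _ \<gamma> \<delta>] in \<open>simp_all add: fine_subdivision_def\<close>)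
  next
    case False
    with j obtain i where i: "j = n + i" "i < n" by (metis add_diff_inverse_nat mult_2 nat_add_left_cancel_less)
    show ?thesis
      unfolding i(1)
      by (rule small_path_cong[of "piece n i \<delta>"])
        (use \<delta> i piece_pjoin_right[where \<gamma>=\<gamma> and \<delta>=\<delta>, OF i(2) _ e] in \<open>simp_all add: fine_subdivision_def\<close>)
  qed
  then show ?thesis using \<gamma> by (simp add: fine_subdivision_def)
qed

lemma small_grid:
  assumes h: "continuous_map (top_of_set ({0..1} \<times> {0..1})) X h"
  obtains n where "0 < n" "\<And>j k. j < n \<Longrightarrow> k < n \<Longrightarrow> small (h ` (subdiv_interval n j \<times> subdiv_interval n k))"
proof -
  obtain \<delta> where \<delta>: "0 < \<delta>"
    "\<And>T. T \<subseteq> {0..1} \<times> {0..1} \<Longrightarrow> diameter T < \<delta> \<Longrightarrow> small (h ` T)"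
    using Lebesgue_number[OF compact_Times[OF compact_Icc compact_Icc] h] by blast
  obtain n :: nat where n: "2 / \<delta> < n" using reals_Archimedean2 by blast
  have "0 < n" using n \<delta>(1) by (metis of_nat_0_less_iff less_trans zero_less_divide_iff zero_less_numeral)
  with n \<delta>(1) have "2 / real n < \<delta>" by (simp add: field_simps)
  show ?thesis
  proof (rule that[OF \<open>0 < n\<close>])
    fix j k assume "j < n" "k < n"
    then have "subdiv_interval n j \<times> subdiv_interval n k \<subseteq> {0..1} \<times> {0..1}"
      using subdiv_interval_subset by blast
    moreover have "diameter (subdiv_interval n j \<times> subdiv_interval n k) < \<delta>"
      using diameter_subdiv_cell[OF \<open>0 < n\<close>, of j k] \<open>2 / real n < \<delta>\<close> by linarith
    ultimately show "small (h ` (subdiv_interval n j \<times> subdiv_interval n k))" by (rule \<delta>(2))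
  qed
qed

lemma fine_slice:
  fixes S :: "real set"
  assumes n: "0 < n" and s: "s \<in> S" and S: "convex S"
    and h: "continuous_map (top_of_set (S \<times> {0..1})) X h"
    and small: "\<And>k. k < n \<Longrightarrow> small (h ` (S \<times> subdiv_interval n k))"
  shows "fine_subdivision (\<lambda>t. h (s, t)) n"
  unfolding fine_subdivision_def piece_slice
proof (intro conjI allI impI n)
  fix k assume k: "k < n"
  show "small_path (h \<circ> linepath (s, real k / real n) (s, real (Suc k) / real n))"
    by (rule small_path_linepath[OF strip_cell[OF S h k] small[OF k] slice_endpoints_in_cell[OF s]])
qed

end

section \<open>Gluing along the intersection\<close>

locale mayer_vietoris = group G + two_open_cover X U V
  for G :: "('g, 'b) monoid_scheme" (structure) and X :: "'p topology" and U V
begin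

lemma cocycle_eqI_small:
  assumes w: "w \<in> cocycle G X Y" and w': "w' \<in> cocycle G X Y'"
    and eq: "\<And>\<sigma>. small_path \<sigma> \<Longrightarrow> w \<sigma> = w' \<sigma>"
  shows "w = w'"
proof
  fix \<gamma> show "w \<gamma> = w' \<gamma>"
  proof (cases "pathin X \<gamma>")
    case True
    then obtain n where n: "fine_subdivision \<gamma> n" by (rule fine_exists)
    then have "ordered_prod G (\<lambda>k. w (piece n k \<gamma>)) n = ordered_prod G (\<lambda>k. w' (piece n k \<gamma>)) n"
      by (intro ordered_prod_cong eq) (simp add: fine_subdivision_def)
    moreover have "0 < n" using n by (simp add: fine_subdivision_def)
    ultimately show ?thesis
      using cocycle_subdivision[OF w True, of n] cocycle_subdivision[OF w' True, of n] by simp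
  next
    case False
    then show ?thesis using cocycle_nonpath[OF w] cocycle_nonpath[OF w'] by simp
  qed
qed

end

locale mayer_vietoris_gluing = mayer_vietoris G X U V
  for G :: "('g, 'b) monoid_scheme" (structure) and X :: "'p topology" and U V +
  fixes u v :: "(real \<Rightarrow> 'p) \<Rightarrow> 'g" and YU YV :: "'p set"
  assumes u: "u \<in> cocycle G (subtopology X U) YU"
    and v: "v \<in> cocycle G (subtopology X V) YV"
    and agree: "\<And>\<sigma>. pathin (subtopology X (U \<inter> V)) \<sigma> \<Longrightarrow> u \<sigma> = v \<sigma>"
begin

definition uv :: "(real \<Rightarrow> 'p) \<Rightarrow> 'g" where
  "uv \<sigma> = (if pathin (subtopology X U) \<sigma> then u \<sigma> else v \<sigma>)"

definition subdiv_value :: "(real \<Rightarrow> 'p) \<Rightarrow> nat \<Rightarrow> 'g" where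
  "subdiv_value \<gamma> n = ordered_prod G (\<lambda>k. uv (piece n k \<gamma>)) n"

definition glued :: "(real \<Rightarrow> 'p) \<Rightarrow> 'g" where
  "glued \<gamma> = (if pathin X \<gamma> then subdiv_value \<gamma> (SOME n. fine_subdivision \<gamma> n) else \<one>)"

lemma uv_U: "pathin (subtopology X U) \<sigma> \<Longrightarrow> uv \<sigma> = u \<sigma>"
  by (simp add: uv_def)

lemma uv_V: "pathin (subtopology X V) \<sigma> \<Longrightarrow> uv \<sigma> = v \<sigma>"
  using agree by (auto simp: uv_def pathin_subtopology)

lemma small_local_cocycle:
  assumes "small S"
  shows "\<exists>W z YW. S \<subseteq> W \<and> z \<in> cocycle G (subtopology X W) YW
    \<and> (\<forall>\<tau>. pathin (subtopology X W) \<tau> \<longrightarrow> uv \<tau> = z \<tau>)"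
  using assms u v uv_U uv_V unfolding small_def by blast

lemma small_path_local_cocycle:
  assumes "small_path \<sigma>"
  shows "\<exists>W z YW. pathin (subtopology X W) \<sigma> \<and> z \<in> cocycle G (subtopology X W) YW
    \<and> (\<forall>\<tau>. pathin (subtopology X W) \<tau> \<longrightarrow> uv \<tau> = z \<tau>)"
proof -
  have \<sigma>: "pathin X \<sigma>" "small (\<sigma> ` {0..1})" using assms by (auto simp: small_path_iff)
  then show ?thesis
    using small_local_cocycle[OF \<sigma>(2)] by (auto simp: pathin_subtopology)
qed

lemma uv_closed:
  assumes "small_path \<sigma>" shows "uv \<sigma> \<in> carrier G"
proof -
  obtain W z YW where "pathin (subtopology X W) \<sigma>" "z \<in> cocycle G (subtopology X W) YW"
    "\<And>\<tau>. pathin (subtopology X W) \<tau> \<Longrightarrow> uv \<tau> = z \<tau>"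
    using small_path_local_cocycle[OF assms] by blast
  then show ?thesis using cocycle_closed by simp
qed

lemma uv_cong:
  assumes "small_path \<sigma>" "\<And>t. t \<in> {0..1} \<Longrightarrow> \<sigma> t = \<sigma>' t"
  shows "uv \<sigma> = uv \<sigma>'"
proof -
  obtain W z YW where \<sigma>: "pathin (subtopology X W) \<sigma>" and z: "z \<in> cocycle G (subtopology X W) YW"
    and uvz: "\<And>\<tau>. pathin (subtopology X W) \<tau> \<Longrightarrow> uv \<tau> = z \<tau>"
    using small_path_local_cocycle[OF assms(1)] by blast
  have "pathin (subtopology X W) \<sigma>'" using pathin_cong[OF \<sigma> assms(2)] .
  with \<sigma> show ?thesis using uvz cocycle_cong[OF z \<sigma> assms(2)] by simp
qed

lemma uv_const:
  assumes "x \<in> topspace X" shows "uv (\<lambda>t. x) = \<one>"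
proof -
  have "small {x}" using assms topspace_eq by (auto simp: small_def)
  then obtain W z YW where W: "{x} \<subseteq> W" and z: "z \<in> cocycle G (subtopology X W) YW"
    and uvz: "\<And>\<tau>. pathin (subtopology X W) \<tau> \<Longrightarrow> uv \<tau> = z \<tau>"
    using small_local_cocycle by blast
  from W assms have x: "x \<in> topspace (subtopology X W)" by simp
  then show ?thesis using uvz[of "\<lambda>t. x"] cocycle_const[OF z x] by simp
qed

lemma uv_constant_path:
  assumes \<sigma>: "small_path \<sigma>" and const: "\<And>t. t \<in> {0..1} \<Longrightarrow> \<sigma> t = x"
  shows "uv \<sigma> = \<one>"
proof -
  have "x \<in> topspace X"
    using path_start_in_topspace[OF small_path_pathin[OF \<sigma>]] const[of 0] by simp
  then show ?thesis using uv_cong[OF \<sigma> const] uv_const by simp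
qed

lemma uv_subdivision:
  assumes \<sigma>: "small_path \<sigma>" and m: "0 < m"
  shows "uv \<sigma> = ordered_prod G (\<lambda>i. uv (piece m i \<sigma>)) m"
proof -
  obtain W z YW where \<sigma>W: "pathin (subtopology X W) \<sigma>" and z: "z \<in> cocycle G (subtopology X W) YW"
    and uvz: "\<And>\<tau>. pathin (subtopology X W) \<tau> \<Longrightarrow> uv \<tau> = z \<tau>"
    using small_path_local_cocycle[OF \<sigma>] by blast
  have "uv \<sigma> = ordered_prod G (\<lambda>i. z (piece m i \<sigma>)) m"
    using uvz[OF \<sigma>W] cocycle_subdivision[OF z \<sigma>W m] by simp
  also have "\<dots> = ordered_prod G (\<lambda>i. uv (piece m i \<sigma>)) m"
    using uvz pathin_piece[OF \<sigma>W] by (intro ordered_prod_cong) simp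
  finally show ?thesis .
qed

lemma uv_linepath_triangle:
  fixes C :: "'v::real_normed_vector set"
  assumes C: "convex C" and h: "continuous_map (top_of_set C) X h" and small: "small (h ` C)"
    and abc: "a \<in> C" "b \<in> C" "c \<in> C"
  shows "uv (h \<circ> linepath a c) = uv (h \<circ> linepath a b) \<otimes> uv (h \<circ> linepath b c)"
proof -
  obtain W z YW where W: "h ` C \<subseteq> W" and z: "z \<in> cocycle G (subtopology X W) YW"
    and uvz: "\<And>\<tau>. pathin (subtopology X W) \<tau> \<Longrightarrow> uv \<tau> = z \<tau>"
    using small_local_cocycle[OF small] by blast
  have hW: "continuous_map (top_of_set C) (subtopology X W) h"
    using h W by (simp add: continuous_map_in_subtopology image_subset_iff_funcset)
  have "pathin (subtopology X W) (h \<circ> linepath x y)" if "x \<in> C" "y \<in> C" for x y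
    using pathin_compose[OF pathin_linepath[OF C that] hW] .
  then show ?thesis
    using cocycle_linepath_triangle[OF z C hW abc] uvz abc by simp
qed

lemma uv_rectangle:
  fixes C :: "'v::real_normed_vector set"
  assumes C: "convex C" and h: "continuous_map (top_of_set C) X h" and small: "small (h ` C)"
    and abcd: "a \<in> C" "b \<in> C" "c \<in> C" "d \<in> C"
  shows "uv (h \<circ> linepath a b)
       = uv (h \<circ> linepath a c) \<otimes> uv (h \<circ> linepath c d) \<otimes> inv (uv (h \<circ> linepath b d))"
proof -
  have cl: "uv (h \<circ> linepath x y) \<in> carrier G" if "x \<in> C" "y \<in> C" for x y
    using uv_closed small_path_linepath[OF C h small that] by blast
  have "uv (h \<circ> linepath a b) \<otimes> uv (h \<circ> linepath b d) = uv (h \<circ> linepath a c) \<otimes> uv (h \<circ> linepath c d)"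
    using uv_linepath_triangle[OF C h small, of a b d] uv_linepath_triangle[OF C h small, of a c d] abcd
    by simp
  then show ?thesis
    using abcd cl by (simp add: inv_solve_right)
qed

lemma subdiv_value_closed: "fine_subdivision \<gamma> n \<Longrightarrow> subdiv_value \<gamma> n \<in> carrier G"
  unfolding subdiv_value_def fine_subdivision_def by (intro ordered_prod_closed uv_closed) simp

lemma subdiv_value_mult:
  assumes \<gamma>: "fine_subdivision \<gamma> n" and m: "0 < m"
  shows "subdiv_value \<gamma> (n * m) = subdiv_value \<gamma> n"
proof -
  have n: "0 < n" using \<gamma> by (simp add: fine_subdivision_def)
  have "subdiv_value \<gamma> (n * m)
      = ordered_prod G (\<lambda>k. ordered_prod G (\<lambda>i. uv (piece (n * m) (k * m + i) \<gamma>)) m) n"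
    unfolding subdiv_value_def using fine_mult[OF \<gamma> m]
    by (intro ordered_prod_blocks uv_closed) (simp add: fine_subdivision_def)
  also have "\<dots> = ordered_prod G (\<lambda>k. ordered_prod G (\<lambda>i. uv (piece m i (piece n k \<gamma>))) m) n"
    by (simp add: piece_piece n m)
  also have "\<dots> = subdiv_value \<gamma> n"
    unfolding subdiv_value_def using \<gamma> m
    by (intro ordered_prod_cong uv_subdivision[symmetric]) (simp_all add: fine_subdivision_def)
  finally show ?thesis .
qed

lemma subdiv_value_indep:
  "fine_subdivision \<gamma> n \<Longrightarrow> fine_subdivision \<gamma> n' \<Longrightarrow> subdiv_value \<gamma> n = subdiv_value \<gamma> n'"
  using subdiv_value_mult[of \<gamma> n n'] subdiv_value_mult[of \<gamma> n' n]
  by (simp add: fine_subdivision_def mult.commute)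

lemma glued_eq:
  assumes "pathin X \<gamma>" "fine_subdivision \<gamma> n"
  shows "glued \<gamma> = subdiv_value \<gamma> n"
proof -
  have "fine_subdivision \<gamma> (SOME n. fine_subdivision \<gamma> n)"
    using assms(2) by (rule someI)
  then show ?thesis
    unfolding glued_def using assms(1) subdiv_value_indep[OF _ assms(2)] by simp
qed

lemma glued_closed: "glued \<gamma> \<in> carrier G"
proof (cases "pathin X \<gamma>")
  case True
  then obtain n where "fine_subdivision \<gamma> n" by (rule fine_exists)
  then show ?thesis using glued_eq[OF True] subdiv_value_closed by simp
qed (simp add: glued_def)

lemma glued_small:
  assumes \<gamma>: "small_path \<gamma>"
  shows "glued \<gamma> = uv \<gamma>"
proof -
  have "small_path (piece 1 0 \<gamma>)" by (rule small_path_cong[OF \<gamma>]) (simp add: piece_def linepath_def)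
  then have fine: "fine_subdivision \<gamma> 1" by (simp add: fine_subdivision_def)
  have "glued \<gamma> = uv (piece 1 0 \<gamma>)"
    using glued_eq[OF small_path_pathin[OF \<gamma>] fine] uv_closed \<open>small_path (piece 1 0 \<gamma>)\<close>
    by (simp add: subdiv_value_def)
  also have "\<dots> = uv \<gamma>"
    by (rule uv_cong[OF \<open>small_path (piece 1 0 \<gamma>)\<close>]) (simp add: piece_def linepath_def)
  finally show ?thesis .
qed

lemma subdiv_value_pjoin:
  assumes \<gamma>: "fine_subdivision \<gamma> n" and \<delta>: "fine_subdivision \<delta> n" and e: "\<gamma> 1 = \<delta> 0"
  shows "subdiv_value (pjoin \<gamma> \<delta>) (2 * n) = subdiv_value \<gamma> n \<otimes> subdiv_value \<delta> n"
proof -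
  define f where "f = (\<lambda>k. uv (piece (2 * n) k (pjoin \<gamma> \<delta>)))"
  have left: "f k = uv (piece n k \<gamma>)" if k: "k < n" for k
    unfolding f_def
    by (rule uv_cong[symmetric])
      (use \<gamma> k piece_pjoin_left[OF k, of _ \<gamma> \<delta>] in \<open>simp_all add: fine_subdivision_def\<close>)
  have right: "f (n + i) = uv (piece n i \<delta>)" if i: "i < n" for i
    unfolding f_def
    by (rule uv_cong[symmetric])
      (use \<delta> i piece_pjoin_right[where \<gamma>=\<gamma> and \<delta>=\<delta>, OF i _ e] in \<open>simp_all add: fine_subdivision_def\<close>)
  have "subdiv_value (pjoin \<gamma> \<delta>) (2 * n) = ordered_prod G f (n + n)"
    by (simp add: subdiv_value_def f_def mult_2)
  also have "\<dots> = ordered_prod G f n \<otimes> ordered_prod G (\<lambda>i. f (n + i)) n"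
  proof (rule ordered_prod_add)
    fix k assume "k < n + n"
    then show "f k \<in> carrier G"
      using fine_pjoin[OF \<gamma> \<delta> e] uv_closed by (simp add: f_def fine_subdivision_def)
  qed
  also have "\<dots> = subdiv_value \<gamma> n \<otimes> subdiv_value \<delta> n"
    unfolding subdiv_value_def
    by (intro arg_cong2[where f="(\<otimes>)"] ordered_prod_cong) (simp_all add: left right)
  finally show ?thesis .
qed

lemma glued_pjoin:
  assumes \<gamma>: "pathin X \<gamma>" and \<delta>: "pathin X \<delta>" and e: "\<gamma> 1 = \<delta> 0"
  shows "glued (pjoin \<gamma> \<delta>) = glued \<gamma> \<otimes> glued \<delta>"
proof -
  obtain n where \<gamma>n: "fine_subdivision \<gamma> n" and \<delta>n: "fine_subdivision \<delta> n"
    using fine_common[OF \<gamma> \<delta>] by blast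
  then show ?thesis
    using glued_eq[OF \<gamma> \<gamma>n] glued_eq[OF \<delta> \<delta>n]
      glued_eq[OF pathin_pjoin[OF \<gamma> \<delta> e] fine_pjoin[OF \<gamma>n \<delta>n e]] subdiv_value_pjoin[OF \<gamma>n \<delta>n e]
    by simp
qed

lemma subdiv_value_strip:
  fixes s0 s1 :: real
  assumes s: "s0 \<le> s1" and n: "0 < n"
    and h: "continuous_map (top_of_set ({s0..s1} \<times> {0..1})) X h"
    and small: "\<And>k. k < n \<Longrightarrow> small (h ` ({s0..s1} \<times> subdiv_interval n k))"
    and bottom: "\<And>s. s \<in> {s0..s1} \<Longrightarrow> h (s, 0) = h (s0, 0)"
    and top: "\<And>s. s \<in> {s0..s1} \<Longrightarrow> h (s, 1) = h (s0, 1)"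
  shows "subdiv_value (\<lambda>t. h (s0, t)) n = subdiv_value (\<lambda>t. h (s1, t)) n"
proof -
  define side where "side k = h \<circ> linepath (s0, real k / real n) (s1, real k / real n)" for k
  have "convex {s0..s1}" by simp
  note C = strip_cell[OF this h]
  have "s0 \<in> {s0..s1}" "s1 \<in> {s0..s1}" using s by auto
  note P0 = slice_endpoints_in_cell[OF this(1)] and P1 = slice_endpoints_in_cell[OF this(2)]
  have row_small: "small_path (piece n k (\<lambda>t. h (s1, t)))" if "k < n" for k
    unfolding piece_slice by (rule small_path_linepath[OF C[OF that] small[OF that] P1])
  have side_small: "small_path (side k)" if "k \<le> n" for k
  proof (cases "k < n")
    case True
    show ?thesis
      unfolding side_def by (rule small_path_linepath[OF C[OF True] small[OF True] P0(1) P1(1)])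
  next
    case False
    with that n have k: "k = Suc (n - 1)" "n - 1 < n" by auto
    show ?thesis
      unfolding side_def k(1) by (rule small_path_linepath[OF C[OF k(2)] small[OF k(2)] P0(2) P1(2)])
  qed
  have lp: "linepath s0 s1 t \<in> {s0..s1}" if "t \<in> {0..1}" for t
    using linepath_in_path[OF that, of s0 s1] s by (simp add: closed_segment_eq_real_ivl)
  have "uv (side 0) = \<one>"
    using side_small[of 0] bottom[OF lp]
    by (intro uv_constant_path[where x="h (s0, 0)"]) (auto simp: side_def linepath_Pair)
  moreover have "uv (side n) = \<one>"
    using side_small[of n] top[OF lp] n
    by (intro uv_constant_path[where x="h (s0, 1)"]) (auto simp: side_def linepath_Pair)
  moreover have "subdiv_value (\<lambda>t. h (s0, t)) n
      = ordered_prod G (\<lambda>k. uv (side k) \<otimes> uv (piece n k (\<lambda>t. h (s1, t))) \<otimes> inv (uv (side (Suc k)))) n"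
    unfolding subdiv_value_def
  proof (rule ordered_prod_cong)
    fix k assume k: "k < n"
    show "uv (piece n k (\<lambda>t. h (s0, t)))
        = uv (side k) \<otimes> uv (piece n k (\<lambda>t. h (s1, t))) \<otimes> inv (uv (side (Suc k)))"
      unfolding piece_slice side_def by (rule uv_rectangle[OF C[OF k] small[OF k] P0 P1])
  qed
  moreover have "\<dots> = uv (side 0) \<otimes> subdiv_value (\<lambda>t. h (s1, t)) n \<otimes> inv (uv (side n))"
    unfolding subdiv_value_def
    using side_small row_small by (intro ordered_prod_telescope uv_closed) auto
  ultimately show ?thesis
    using subdiv_value_closed row_small n by (simp add: fine_subdivision_def)
qed

lemma glued_homotopic:
  assumes pq: "path_homotopic X p q"
  shows "glued p = glued q"
proof -
  obtain h :: "real \<times> real \<Rightarrow> 'p" where h: "continuous_map (top_of_set ({0..1} \<times> {0..1})) X h"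
    and h0: "\<forall>t. h (0, t) = p t" and h1: "\<forall>t. h (1, t) = q t"
    and ends: "\<forall>s\<in>{0..1}. h (s, 0) = p 0 \<and> h (s, 1) = p 1"
    using pq unfolding path_homotopic_def homotopic_with_def by auto
  obtain n where n: "0 < n"
    and cells: "\<And>j k. j < n \<Longrightarrow> k < n \<Longrightarrow> small (h ` (subdiv_interval n j \<times> subdiv_interval n k))"
    using small_grid[OF h] by blast
  have strip: "continuous_map (top_of_set (subdiv_interval n j \<times> {0..1})) X h" if "j < n" for j
  proof -
    have "subdiv_interval n j \<times> {0..1} \<subseteq> {0..1} \<times> {0..1}" using subdiv_interval_subset[OF that] by auto
    then show ?thesis using continuous_map_from_subtopology_mono[OF h] by blast
  qed
  define row where "row j = (\<lambda>t. h (real j / real n, t))" for j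
  have "subdiv_value (row j) n = subdiv_value (row (Suc j)) n" if j: "j < n" for j
  proof -
    have "subdiv_interval n j \<subseteq> {0..1}" by (rule subdiv_interval_subset[OF j])
    then have "h (s, 0) = p 0 \<and> h (s, 1) = p 1" if "s \<in> subdiv_interval n j" for s
      using ends that by blast
    then show ?thesis
      unfolding row_def using n strip[OF j] cells[OF j]
      by (intro subdiv_value_strip) (auto simp: subdiv_interval_def divide_right_mono)
  qed
  then have same_value: "subdiv_value (row j) n = subdiv_value (row 0) n" if "j \<le> n" for j
    using that by (induction j) auto
  have fine_row: "fine_subdivision (row j) n" if "i < n" "real j / real n \<in> subdiv_interval n i" for i j
    unfolding row_def
    by (rule fine_slice[OF n that(2) _ strip[OF that(1)] cells[OF that(1)]]) (simp add: subdiv_interval_def)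
  have "row 0 = p" "row n = q" using n by (simp_all add: row_def h0 h1)
  moreover have "fine_subdivision (row 0) n"
    using n by (intro fine_row[of 0]) (simp_all add: subdiv_interval_def)
  moreover have "fine_subdivision (row n) n"
    using n by (intro fine_row[of "n - 1"]) (simp_all add: subdiv_interval_def of_nat_diff)
  ultimately show ?thesis
    using same_value[of n] glued_eq path_homotopic_imp_pathin[OF pq] by simp
qed

lemma glued_cocycle:
  assumes Y: "Y \<subseteq> U \<inter> YU"
  shows "glued \<in> cocycle G X Y"
  unfolding cocycle_def mem_Collect_eq
proof (intro conjI allI impI)
  fix p assume p: "pathin X p \<and> p ` {0..1} \<subseteq> Y"
  then have "pathin (subtopology X U) p" using Y by (auto simp: pathin_subtopology)
  then have "glued p = u p" using glued_small uv_U by (simp add: small_path_def)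
  also have "\<dots> = \<one>"
    using cocycle_base[OF u \<open>pathin (subtopology X U) p\<close>] p Y by auto
  finally show "glued p = \<one>" .
next
  fix p assume "\<not> pathin X p" then show "glued p = \<one>" by (simp add: glued_def)
qed (auto simp: glued_closed glued_homotopic glued_pjoin)

lemma restr_glued_U: "restr G X U glued = u"
  using glued_small uv_U cocycle_nonpath[OF u] by (auto simp: restr_def small_path_def fun_eq_iff)

lemma restr_glued_V: "restr G X V glued = v"
  using glued_small uv_V cocycle_nonpath[OF v] by (auto simp: restr_def small_path_def fun_eq_iff)

end

section \<open>The restriction map to U and V\<close>

context mayer_vietoris
begin

lemma cochain0_glue:
  assumes c: "c \<in> cochain0 G (subtopology X U) (Y \<inter> U)" and d: "d \<in> cochain0 G (subtopology X V) (Y \<inter> V)"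
  shows "(\<lambda>x. if x \<in> U then c x else d x) \<in> cochain0 G X Y"
  using c d topspace_eq by (auto simp: cochain0_def)

lemma cochains_agree_on_intersection:
  assumes w: "w \<in> cocycle G X Y"
    and c: "c \<in> cochain0 G (subtopology X U) (Y \<inter> U)" and d: "d \<in> cochain0 G (subtopology X V) (Y \<inter> V)"
    and onU: "\<And>\<sigma>. pathin (subtopology X U) \<sigma> \<Longrightarrow> w' \<sigma> = c (\<sigma> 0) \<otimes> w \<sigma> \<otimes> inv (c (\<sigma> 1))"
    and onV: "\<And>\<sigma>. pathin (subtopology X V) \<sigma> \<Longrightarrow> w' \<sigma> = d (\<sigma> 0) \<otimes> w \<sigma> \<otimes> inv (d (\<sigma> 1))"
    and conn: "\<exists>y\<in>Y. path_component_of (subtopology X (U \<inter> V)) y x"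
  shows "c x = d x"
proof -
  obtain y g where y: "y \<in> Y" and g: "pathin (subtopology X (U \<inter> V)) g" "g 0 = y" "g 1 = x"
    using conn by (auto simp: path_component_of_def)
  then have gU: "pathin (subtopology X U) g" and gV: "pathin (subtopology X V) g"
    and "y \<in> U \<inter> V"
    using path_start_in_topspace[OF g(1)] by (auto simp: pathin_subtopology)
  then have "c y = \<one>" "d y = \<one>" using y cochain0_base[OF c] cochain0_base[OF d] by auto
  moreover have "w g \<in> carrier G" using gU cocycle_closed[OF w] by (simp add: pathin_subtopology)
  ultimately have "w g \<otimes> inv (c x) = w g \<otimes> inv (d x)"
    using onU[OF gU] onV[OF gV] g cochain0_closed[OF c] cochain0_closed[OF d] by simp
  then have "inv (c x) = inv (d x)"
    using \<open>w g \<in> carrier G\<close> cochain0_closed[OF c] cochain0_closed[OF d] by simp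
  then show ?thesis using inv_inv cochain0_closed[OF c] cochain0_closed[OF d] by metis
qed

lemma restriction_pair_inj:
  assumes conn: "\<And>x. x \<in> U \<inter> V \<Longrightarrow> \<exists>y\<in>Y. path_component_of (subtopology X (U \<inter> V)) y x"
  shows "inj_on (\<lambda>k. (rmap G X U Y k, rmap G X V Y k)) (H1 G X Y)"
proof (rule inj_onI)
  fix k1 k2 assume k1: "k1 \<in> H1 G X Y" and k2: "k2 \<in> H1 G X Y"
    and eq: "(rmap G X U Y k1, rmap G X V Y k1) = (rmap G X U Y k2, rmap G X V Y k2)"
  obtain w1 where w1: "w1 \<in> cocycle G X Y" and k1_eq: "k1 = cls G X Y w1" using k1 by (rule H1E)
  obtain w2 where w2: "w2 \<in> cocycle G X Y" and k2_eq: "k2 = cls G X Y w2" using k2 by (rule H1E)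
  have cohomologous: "\<exists>c \<in> cochain0 G (subtopology X W) (Y \<inter> W).
      restr G X W w1 = cact G (subtopology X W) c (restr G X W w2)"
    if "rmap G X W Y k1 = rmap G X W Y k2" for W
    using that restr_cocycle[OF w1] restr_cocycle[OF w2]
    by (simp add: k1_eq k2_eq rmap_cls w1 w2 cls_eq_iff)
  obtain c where c: "c \<in> cochain0 G (subtopology X U) (Y \<inter> U)"
    and cU: "restr G X U w1 = cact G (subtopology X U) c (restr G X U w2)"
    using cohomologous[of U] eq by auto
  obtain d where d: "d \<in> cochain0 G (subtopology X V) (Y \<inter> V)"
    and dV: "restr G X V w1 = cact G (subtopology X V) d (restr G X V w2)"
    using cohomologous[of V] eq by auto
  note onU = restr_eq_cactD[OF cU] and onV = restr_eq_cactD[OF dV]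
  define e where "e x = (if x \<in> U then c x else d x)" for x
  have e: "e \<in> cochain0 G X Y" unfolding e_def using c d by (rule cochain0_glue)
  have "w1 = cact G X e w2"
  proof (rule cocycle_eqI_small[OF w1 cact_cocycle[OF e w2]])
    fix \<sigma> assume "small_path \<sigma>"
    then consider "pathin (subtopology X U) \<sigma>" | "pathin (subtopology X V) \<sigma>"
      unfolding small_path_def by blast
    then show "w1 \<sigma> = cact G X e w2 \<sigma>"
    proof cases
      case 1
      then show ?thesis using onU[OF 1] by (simp add: cact_def e_def pathin_subtopology)
    next
      case 2
      then have "\<sigma> 0 \<in> V" "\<sigma> 1 \<in> V" by (auto simp: pathin_subtopology)
      then show ?thesis
        using onV[OF 2] 2 cochains_agree_on_intersection[OF w2 c d onU onV conn]
        by (simp add: cact_def e_def pathin_subtopology)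
    qed
  qed
  then show "k1 = k2"
    unfolding k1_eq k2_eq using w1 w2 e by (subst cls_eq_iff) auto
qed

lemma cocycle_adjust_to_agree:
  assumes Y: "Y \<subseteq> U \<inter> V"
    and u: "u \<in> cocycle G (subtopology X U) Y" and v: "v \<in> cocycle G (subtopology X V) Y"
    and uv: "rmap G (subtopology X U) (U \<inter> V) Y (cls G (subtopology X U) Y u)
      = rmap G (subtopology X V) (U \<inter> V) Y (cls G (subtopology X V) Y v)"
  obtains v' where "v' \<in> cocycle G (subtopology X V) Y"
    "cls G (subtopology X V) Y v' = cls G (subtopology X V) Y v"
    "\<And>\<sigma>. pathin (subtopology X (U \<inter> V)) \<sigma> \<Longrightarrow> u \<sigma> = v' \<sigma>"
proof -
  have YUV: "Y \<inter> (U \<inter> V) = Y" using Y by auto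
  define Z where "Z = subtopology X (U \<inter> V)"
  have ZU: "subtopology (subtopology X U) (U \<inter> V) = Z" and ZV: "subtopology (subtopology X V) (U \<inter> V) = Z"
    by (simp_all add: Z_def subtopology_subtopology Int_left_absorb Int_left_commute)
  define ru where "ru = restr G (subtopology X U) (U \<inter> V) u"
  define rv where "rv = restr G (subtopology X V) (U \<inter> V) v"
  have ru: "ru \<in> cocycle G Z Y" and rv: "rv \<in> cocycle G Z Y"
    using restr_cocycle[OF u, of "U \<inter> V"] restr_cocycle[OF v, of "U \<inter> V"]
    by (simp_all add: ru_def rv_def ZU ZV YUV)
  have "cls G Z Y rv = cls G Z Y ru"
    using uv unfolding rmap_cls[OF u] rmap_cls[OF v] by (simp add: ru_def rv_def ZU ZV YUV)
  then obtain c where c: "c \<in> cochain0 G Z Y" and rv_eq: "rv = cact G Z c ru"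
    using cls_eq_iff[OF ru rv] by blast
  have cV: "c \<in> cochain0 G (subtopology X V) Y"
    using c unfolding ZV[symmetric] by (rule cochain0_extend) simp
  define v' where "v' = cact G (subtopology X V) (\<lambda>x. inv (c x)) v"
  have v': "v' \<in> cocycle G (subtopology X V) Y"
    unfolding v'_def by (rule cact_cocycle[OF cochain0_inv[OF cV] v])
  moreover have "cls G (subtopology X V) Y v' = cls G (subtopology X V) Y v"
    using cochain0_inv[OF cV] v' v by (subst cls_eq_iff) (auto simp: v'_def)
  moreover have "u \<sigma> = v' \<sigma>" if \<sigma>: "pathin (subtopology X (U \<inter> V)) \<sigma>" for \<sigma>
  proof -
    have \<sigma>V: "pathin (subtopology X V) \<sigma>" and \<sigma>Z: "pathin Z \<sigma>"
      using \<sigma> by (auto simp: Z_def pathin_subtopology)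
    have "v \<sigma> = c (\<sigma> 0) \<otimes> u \<sigma> \<otimes> inv (c (\<sigma> 1))"
      using fun_cong[OF rv_eq, of \<sigma>] \<sigma>Z by (simp add: ru_def rv_def restr_def cact_def ZU ZV)
    moreover have "u \<sigma> \<in> carrier G"
      using cocycle_closed[OF u] \<sigma> by (auto simp: pathin_subtopology)
    ultimately show ?thesis
      using \<sigma>V cochain0_closed[OF c] by (simp add: v'_def cact_def m_assoc[symmetric]) (simp add: m_assoc)
  qed
  ultimately show thesis by (rule that)
qed

lemma restriction_pair_surj:
  assumes Y: "Y \<subseteq> U \<inter> V"
    and \<alpha>: "\<alpha> \<in> H1 G (subtopology X U) (Y \<inter> U)" and \<beta>: "\<beta> \<in> H1 G (subtopology X V) (Y \<inter> V)"
    and \<alpha>\<beta>: "rmap G (subtopology X U) (U \<inter> V) (Y \<inter> U) \<alpha> = rmap G (subtopology X V) (U \<inter> V) (Y \<inter> V) \<beta>"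
  shows "\<exists>k \<in> H1 G X Y. rmap G X U Y k = \<alpha> \<and> rmap G X V Y k = \<beta>"
proof -
  have YU: "Y \<inter> U = Y" and YV: "Y \<inter> V = Y" using Y by auto
  obtain u where u: "u \<in> cocycle G (subtopology X U) Y" and \<alpha>_eq: "\<alpha> = cls G (subtopology X U) Y u"
    using \<alpha> unfolding YU by (rule H1E)
  obtain v where v: "v \<in> cocycle G (subtopology X V) Y" and \<beta>_eq: "\<beta> = cls G (subtopology X V) Y v"
    using \<beta> unfolding YV by (rule H1E)
  obtain v' where v': "v' \<in> cocycle G (subtopology X V) Y"
    and \<beta>_eq': "cls G (subtopology X V) Y v' = \<beta>"
    and agree: "\<And>\<sigma>. pathin (subtopology X (U \<inter> V)) \<sigma> \<Longrightarrow> u \<sigma> = v' \<sigma>"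
    using cocycle_adjust_to_agree[OF Y u v] \<alpha>\<beta> unfolding \<alpha>_eq \<beta>_eq YU YV by blast
  interpret gluing: mayer_vietoris_gluing G X U V u v' Y Y
    by unfold_locales (use u v' agree in auto)
  have glued: "gluing.glued \<in> cocycle G X Y" by (rule gluing.glued_cocycle) (use Y in auto)
  show ?thesis
  proof (intro bexI conjI)
    show "rmap G X U Y (cls G X Y gluing.glued) = \<alpha>"
      unfolding rmap_cls[OF glued] gluing.restr_glued_U YU \<alpha>_eq ..
    show "rmap G X V Y (cls G X Y gluing.glued) = \<beta>"
      unfolding rmap_cls[OF glued] gluing.restr_glued_V YV by fact
  qed (rule cls_in_H1[OF glued])
qed

lemma restriction_pair_bij:
  assumes Y: "Y \<subseteq> U \<inter> V"
    and conn: "\<And>x. x \<in> U \<inter> V \<Longrightarrow> \<exists>y\<in>Y. path_component_of (subtopology X (U \<inter> V)) y x"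
  shows "bij_betw (\<lambda>k. (rmap G X U Y k, rmap G X V Y k)) (H1 G X Y)
           {(\<alpha>, \<beta>). \<alpha> \<in> H1 G (subtopology X U) (Y \<inter> U) \<and> \<beta> \<in> H1 G (subtopology X V) (Y \<inter> V)
                   \<and> rmap G (subtopology X U) (U \<inter> V) (Y \<inter> U) \<alpha>
                   = rmap G (subtopology X V) (U \<inter> V) (Y \<inter> V) \<beta>}"
    (is "bij_betw ?r _ ?P")
  unfolding bij_betw_def
proof (intro conjI restriction_pair_inj[OF conn] subset_antisym)
  show "?r ` H1 G X Y \<subseteq> ?P"
  proof (rule image_subsetI)
    fix k assume k: "k \<in> H1 G X Y"
    then show "?r k \<in> ?P" using rmap_in_H1[OF k] rmap_square_commutes[OF k] by simp
  qed
  show "?P \<subseteq> ?r ` H1 G X Y"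
    using restriction_pair_surj[OF Y] by fastforce
qed

end

section \<open>Decomposition along path components\<close>

locale path_component_decomposition = group G
  for G :: "('g, 'b) monoid_scheme" (structure) +
  fixes Z :: "'p topology" and I :: "'i set" and A :: "'i \<Rightarrow> 'p set"
  assumes path_components: "path_components_of Z = A ` I" and inj_A: "inj_on A I"
begin

lemma component_unique:
  assumes "i \<in> I" "j \<in> I" "x \<in> A i" "x \<in> A j"
  shows "i = j"
proof -
  have "A i \<in> path_components_of Z" "A j \<in> path_components_of Z"
    using assms(1,2) path_components by auto
  then have "A i = A j" using path_components_of_overlap assms(3,4) by blast
  then show ?thesis using inj_A assms(1,2) by (auto dest: inj_onD)
qed

lemma pathin_component:
  assumes "pathin Z \<gamma>"
  obtains i where "i \<in> I" "pathin (subtopology Z (A i)) \<gamma>"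
proof -
  obtain C where "C \<in> path_components_of Z" "\<gamma> ` {0..1} \<subseteq> C"
    using assms by (rule pathin_path_component)
  then obtain i where "i \<in> I" "\<gamma> ` {0..1} \<subseteq> A i" using path_components by auto
  then show thesis using assms by (intro that) (auto simp: pathin_subtopology)
qed

definition index :: "'p \<Rightarrow> 'i" where
  "index x = (SOME i. i \<in> I \<and> x \<in> A i)"

lemma index_eq: "i \<in> I \<Longrightarrow> x \<in> A i \<Longrightarrow> index x = i"
  unfolding index_def by (rule some_equality) (auto intro: component_unique)

definition glue_components :: "('i \<Rightarrow> (real \<Rightarrow> 'p) \<Rightarrow> 'g) \<Rightarrow> (real \<Rightarrow> 'p) \<Rightarrow> 'g" where
  "glue_components z \<gamma> = (if pathin Z \<gamma> then z (index (\<gamma> 0)) \<gamma> else \<one>)"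

lemma glue_components_eq:
  assumes "i \<in> I" "pathin (subtopology Z (A i)) \<gamma>"
  shows "glue_components z \<gamma> = z i \<gamma>"
  using assms index_eq[OF assms(1), of "\<gamma> 0"] by (auto simp: glue_components_def pathin_subtopology)

lemma glue_components_cocycle:
  assumes z: "\<And>i. i \<in> I \<Longrightarrow> z i \<in> cocycle G (subtopology Z (A i)) (Y \<inter> A i)"
  shows "glue_components z \<in> cocycle G Z Y"
  unfolding cocycle_def mem_Collect_eq
proof (intro conjI allI impI)
  fix p assume "pathin Z p"
  then obtain i where "i \<in> I" "pathin (subtopology Z (A i)) p" by (rule pathin_component)
  then show "glue_components z p \<in> carrier G"
    using glue_components_eq cocycle_closed[OF z] by simp
next
  fix p assume "\<not> pathin Z p"
  then show "glue_components z p = \<one>" by (simp add: glue_components_def)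
next
  fix p assume p: "pathin Z p \<and> p ` {0..1} \<subseteq> Y"
  then obtain i where i: "i \<in> I" "pathin (subtopology Z (A i)) p" by (blast elim: pathin_component)
  then have "p ` {0..1} \<subseteq> Y \<inter> A i" using p by (auto simp: pathin_subtopology)
  then show "glue_components z p = \<one>"
    using i glue_components_eq cocycle_base[OF z] by simp
next
  fix p q assume pq: "pathin Z p \<and> pathin Z q \<and> path_homotopic Z p q"
  then obtain i where i: "i \<in> I" "pathin (subtopology Z (A i)) p" by (blast elim: pathin_component)
  then have "A i \<in> path_components_of Z" "p 0 \<in> A i"
    using path_components by (auto simp: pathin_subtopology)
  then have h: "path_homotopic (subtopology Z (A i)) p q"
    using pq path_homotopic_path_component by blast
  then show "glue_components z p = glue_components z q"
    using i path_homotopic_imp_pathin(2)[OF h] glue_components_eq cocycle_homotopic[OF z]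
    by simp
next
  fix p q assume pq: "pathin Z p \<and> pathin Z q \<and> p 1 = q 0"
  then obtain i j where i: "i \<in> I" "pathin (subtopology Z (A i)) p"
    and j: "j \<in> I" "pathin (subtopology Z (A j)) q"
    by (blast elim: pathin_component)
  have "p 1 \<in> A i" "q 0 \<in> A j" using i(2) j(2) by (auto simp: pathin_subtopology)
  then have "j = i" using component_unique[OF i(1) j(1)] pq by auto
  with j pq have "pathin (subtopology Z (A i)) q" "pathin (subtopology Z (A i)) (pjoin p q)"
    using i(2) pathin_pjoin by auto
  then show "glue_components z (pjoin p q) = glue_components z p \<otimes> glue_components z q"
    using i pq glue_components_eq cocycle_pjoin[OF z] by simp
qed

lemma restr_glue_components:
  assumes "i \<in> I" "z i \<in> cocycle G (subtopology Z (A i)) (Y \<inter> A i)"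
  shows "restr G Z (A i) (glue_components z) = z i"
  using assms(1) glue_components_eq cocycle_nonpath[OF assms(2)] by (auto simp: restr_def fun_eq_iff)

lemma cocycle_eqI_components:
  assumes w: "w \<in> cocycle G Z Y" and w': "w' \<in> cocycle G Z Y'"
    and eq: "\<And>i \<sigma>. i \<in> I \<Longrightarrow> pathin (subtopology Z (A i)) \<sigma> \<Longrightarrow> w \<sigma> = w' \<sigma>"
  shows "w = w'"
proof
  fix \<gamma> show "w \<gamma> = w' \<gamma>"
  proof (cases "pathin Z \<gamma>")
    case True
    then obtain i where "i \<in> I" "pathin (subtopology Z (A i)) \<gamma>" by (rule pathin_component)
    then show ?thesis by (rule eq)
  qed (simp add: cocycle_nonpath[OF w] cocycle_nonpath[OF w'])
qed

definition glue_cochains :: "('i \<Rightarrow> 'p \<Rightarrow> 'g) \<Rightarrow> 'p \<Rightarrow> 'g" where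
  "glue_cochains c x = (if \<exists>i\<in>I. x \<in> A i then c (index x) x else \<one>)"

lemma glue_cochains_eq: "i \<in> I \<Longrightarrow> x \<in> A i \<Longrightarrow> glue_cochains c x = c i x"
  using index_eq by (auto simp: glue_cochains_def)

lemma glue_cochains_cochain0:
  assumes c: "\<And>i. i \<in> I \<Longrightarrow> c i \<in> cochain0 G (subtopology Z (A i)) (Y \<inter> A i)"
  shows "glue_cochains c \<in> cochain0 G Z Y"
  unfolding cochain0_def mem_Collect_eq
proof (intro conjI ballI allI impI)
  fix x show "glue_cochains c x \<in> carrier G"
    using cochain0_closed[OF c] index_eq by (auto simp: glue_cochains_def)
next
  fix x assume "x \<in> Y" then show "glue_cochains c x = \<one>"
    using cochain0_base[OF c] index_eq by (auto simp: glue_cochains_def)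
next
  fix x assume "x \<notin> topspace Z"
  then have "\<not> (\<exists>i\<in>I. x \<in> A i)"
    using path_components path_components_of_subset by blast
  then show "glue_cochains c x = \<one>" by (simp add: glue_cochains_def)
qed

lemma restriction_components_inj:
  "inj_on (\<lambda>\<theta>. \<lambda>i\<in>I. rmap G Z (A i) Y \<theta>) (H1 G Z Y)"
proof (rule inj_onI)
  fix \<theta>1 \<theta>2 assume \<theta>1: "\<theta>1 \<in> H1 G Z Y" and \<theta>2: "\<theta>2 \<in> H1 G Z Y"
    and eq: "(\<lambda>i\<in>I. rmap G Z (A i) Y \<theta>1) = (\<lambda>i\<in>I. rmap G Z (A i) Y \<theta>2)"
  obtain w1 where w1: "w1 \<in> cocycle G Z Y" and \<theta>1_eq: "\<theta>1 = cls G Z Y w1" using \<theta>1 by (rule H1E)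
  obtain w2 where w2: "w2 \<in> cocycle G Z Y" and \<theta>2_eq: "\<theta>2 = cls G Z Y w2" using \<theta>2 by (rule H1E)
  have "\<forall>i\<in>I. \<exists>c \<in> cochain0 G (subtopology Z (A i)) (Y \<inter> A i).
      restr G Z (A i) w1 = cact G (subtopology Z (A i)) c (restr G Z (A i) w2)"
  proof
    fix i assume "i \<in> I"
    then have "rmap G Z (A i) Y \<theta>1 = rmap G Z (A i) Y \<theta>2" using fun_cong[OF eq, of i] by simp
    then show "\<exists>c \<in> cochain0 G (subtopology Z (A i)) (Y \<inter> A i).
        restr G Z (A i) w1 = cact G (subtopology Z (A i)) c (restr G Z (A i) w2)"
      using restr_cocycle[OF w1] restr_cocycle[OF w2]
      by (simp add: \<theta>1_eq \<theta>2_eq rmap_cls w1 w2 cls_eq_iff)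
  qed
  then obtain c where c: "\<And>i. i \<in> I \<Longrightarrow> c i \<in> cochain0 G (subtopology Z (A i)) (Y \<inter> A i)"
    and c_eq: "\<And>i. i \<in> I \<Longrightarrow> restr G Z (A i) w1 = cact G (subtopology Z (A i)) (c i) (restr G Z (A i) w2)"
    by metis
  have e: "glue_cochains c \<in> cochain0 G Z Y" using c by (rule glue_cochains_cochain0)
  have "w1 = cact G Z (glue_cochains c) w2"
  proof (rule cocycle_eqI_components[OF w1 cact_cocycle[OF e w2]])
    fix i \<sigma> assume i: "i \<in> I" and \<sigma>: "pathin (subtopology Z (A i)) \<sigma>"
    then have "\<sigma> 0 \<in> A i" "\<sigma> 1 \<in> A i" "pathin Z \<sigma>" by (auto simp: pathin_subtopology)
    then show "w1 \<sigma> = cact G Z (glue_cochains c) w2 \<sigma>"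
      using restr_eq_cactD[OF c_eq[OF i] \<sigma>] i glue_cochains_eq by (simp add: cact_def)
  qed
  then show "\<theta>1 = \<theta>2"
    unfolding \<theta>1_eq \<theta>2_eq using w1 w2 e by (subst cls_eq_iff) auto
qed

lemma restriction_components_surj:
  "(\<Pi>\<^sub>E i\<in>I. H1 G (subtopology Z (A i)) (Y \<inter> A i)) \<subseteq> (\<lambda>\<theta>. \<lambda>i\<in>I. rmap G Z (A i) Y \<theta>) ` H1 G Z Y"
proof
  fix \<beta> assume \<beta>: "\<beta> \<in> (\<Pi>\<^sub>E i\<in>I. H1 G (subtopology Z (A i)) (Y \<inter> A i))"
  have "\<forall>i\<in>I. \<exists>z. z \<in> cocycle G (subtopology Z (A i)) (Y \<inter> A i) \<and> \<beta> i = cls G (subtopology Z (A i)) (Y \<inter> A i) z"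
    using \<beta> by (auto simp: H1_def)
  then obtain z where z: "\<And>i. i \<in> I \<Longrightarrow> z i \<in> cocycle G (subtopology Z (A i)) (Y \<inter> A i)"
    and \<beta>_eq: "\<And>i. i \<in> I \<Longrightarrow> \<beta> i = cls G (subtopology Z (A i)) (Y \<inter> A i) (z i)"
    by metis
  have glued: "glue_components z \<in> cocycle G Z Y" by (rule glue_components_cocycle[OF z])
  have "(\<lambda>i\<in>I. rmap G Z (A i) Y (cls G Z Y (glue_components z))) = \<beta>"
  proof
    fix i show "(\<lambda>i\<in>I. rmap G Z (A i) Y (cls G Z Y (glue_components z))) i = \<beta> i"
    proof (cases "i \<in> I")
      case True
      then show ?thesis
        using \<beta>_eq rmap_cls[OF glued] restr_glue_components[where z=z, OF True z[OF True]] by simp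
    qed (use \<beta> in auto)
  qed
  then show "\<beta> \<in> (\<lambda>\<theta>. \<lambda>i\<in>I. rmap G Z (A i) Y \<theta>) ` H1 G Z Y"
    using cls_in_H1[OF glued] by (auto intro: image_eqI[OF sym])
qed

lemma restriction_components_bij:
  "bij_betw (\<lambda>\<theta>. \<lambda>i\<in>I. rmap G Z (A i) Y \<theta>) (H1 G Z Y) (\<Pi>\<^sub>E i\<in>I. H1 G (subtopology Z (A i)) (Y \<inter> A i))"
  unfolding bij_betw_def
  by (auto intro!: restriction_components_inj restriction_components_surj rmap_in_H1)

lemma basepoints_component:
  assumes "\<And>i. i \<in> I \<Longrightarrow> a i \<in> A i" "i \<in> I"
  shows "a ` I \<inter> A i = {a i}"
  using assms component_unique by auto

lemma basepoints_connect:
  assumes a: "\<And>i. i \<in> I \<Longrightarrow> a i \<in> A i" and x: "x \<in> topspace Z"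
  shows "\<exists>i\<in>I. path_component_of Z (a i) x"
proof -
  have "x \<in> \<Union> (A ` I)" using x Union_path_components_of[of Z] path_components by simp
  then obtain i where i: "i \<in> I" "x \<in> A i" by blast
  then have "path_connectedin Z (A i)"
    using path_components path_connectedin_path_components_of by auto
  with i a show ?thesis by (auto simp: path_component_of)
qed

end

theorem theorem6p8:
  fixes X :: "'a topology" and U V :: "'a set" and m :: nat
    and A :: "nat \<Rightarrow> 'a set" and a :: "nat \<Rightarrow> 'a" and Y :: "'a set"
    and G :: "('g,'b) monoid_scheme"
  assumes "openin X U" and "openin X V"
    and "path_connectedin X U" and "path_connectedin X V"
    and "topspace X = U \<union> V"
    and "m \<ge> 1"
    and "path_components_of (subtopology X (U \<inter> V)) = A ` {0..m}"
    and "inj_on A {0..m}"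
    and "\<And>i. i \<le> m \<Longrightarrow> a i \<in> A i"
    and "Y = a ` {0..m}"
    and "group G"
  shows "(\<forall>k \<in> H1 G X Y.
            rmap G (subtopology X U) (U \<inter> V) (Y \<inter> U) (rmap G X U Y k)
          = rmap G (subtopology X V) (U \<inter> V) (Y \<inter> V) (rmap G X V Y k))
       \<and> bij_betw (\<lambda>k. (rmap G X U Y k, rmap G X V Y k))
           (H1 G X Y)
           {(\<alpha>, \<beta>). \<alpha> \<in> H1 G (subtopology X U) (Y \<inter> U) \<and> \<beta> \<in> H1 G (subtopology X V) (Y \<inter> V)
                   \<and> rmap G (subtopology X U) (U \<inter> V) (Y \<inter> U) \<alpha>
                   = rmap G (subtopology X V) (U \<inter> V) (Y \<inter> V) \<beta>}
       \<and> bij_betw (\<lambda>\<theta>. \<lambda>i\<in>{0..m}. rmap G (subtopology X (U \<inter> V)) (A i) (Y \<inter> (U \<inter> V)) \<theta>)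
           (H1 G (subtopology X (U \<inter> V)) (Y \<inter> (U \<inter> V)))
           (\<Pi>\<^sub>E i\<in>{0..m}. H1 G (subtopology X (A i)) {a i})"
proof -
  interpret mayer_vietoris G X U V
    by (intro mayer_vietoris.intro two_open_cover.intro assms)
  interpret components: path_component_decomposition G "subtopology X (U \<inter> V)" "{0..m}" A
    by (intro path_component_decomposition.intro path_component_decomposition_axioms.intro assms)
  have a: "\<And>i. i \<in> {0..m} \<Longrightarrow> a i \<in> A i" using assms(9) by simp
  have A_UV: "A i \<subseteq> U \<inter> V" if "i \<in> {0..m}" for i
    using path_components_of_subset[of "A i" "subtopology X (U \<inter> V)"] assms(7) that by auto
  have Y: "Y \<subseteq> U \<inter> V" unfolding assms(10) using a A_UV by blast
  have conn: "\<exists>y\<in>Y. path_component_of (subtopology X (U \<inter> V)) y x" if "x \<in> U \<inter> V" for x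
    using components.basepoints_connect[OF a, of x] that assms(5,10) by auto
  have codomain: "(\<Pi>\<^sub>E i\<in>{0..m}. H1 G (subtopology (subtopology X (U \<inter> V)) (A i)) (Y \<inter> (U \<inter> V) \<inter> A i))
      = (\<Pi>\<^sub>E i\<in>{0..m}. H1 G (subtopology X (A i)) {a i})"
    using A_UV components.basepoints_component[OF a] Y assms(10)
    by (intro PiE_cong) (simp add: subtopology_subtopology Int_absorb1 Int_absorb2 Int_assoc[symmetric])
  show ?thesis
  proof (intro conjI ballI)
    show "rmap G (subtopology X U) (U \<inter> V) (Y \<inter> U) (rmap G X U Y k)
        = rmap G (subtopology X V) (U \<inter> V) (Y \<inter> V) (rmap G X V Y k)" if "k \<in> H1 G X Y" for k
      using that by (rule rmap_square_commutes)
  qed (use restriction_pair_bij[OF Y conn] components.restriction_components_bij[of "Y \<inter> (U \<inter> V)"]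
      codomain in simp_all)
qed

end
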